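(* The following hold: (a) For $f\in\mathcal{C}_b(\mathcal{Z})$, $\lim_{\lambda\to 0}\|R_{\lambda}f-\Pi f\|_{\infty}=0$. (b) For $f\in\mathcal{C}_b(\mathcal{Z})$, $\lim_{\lambda\to 0}\|P_{\lambda}^{L}f-Q\Pi f\|_{\infty}=0$. (c) Any i.p.m. $\mu_{\lambda}$ of $P_{\lambda}$ is also an i.p.m. of $P_{\lambda}^{L}$. (d) Any weak limit point in $\mathfrak{P}(\mathcal{Z})$ of $\mu_{\lambda}$, as $\lambda\to 0$, is an i.p.m. of $Q\Pi$.
   Context: Consider a finite strategic-form game with agents $\mathcal{I}=\{1,\dots,n\}$, finite action sets $\mathcal{A}_i$, $\mathcal{A}=\mathcal{A}_1\times\cdots\times\mathcal{A}_n$, and utilities $u_i:\mathcal{A}\to\mathbb{R}$ with $u_i(\alpha)>0$ for all $i,\alpha$ (positive-utility property). Under perturbed learning automata, at each time $t$ each agent $i$ with strategy $x_i(t)\in\Delta(|\mathcal{A}_i|)$ selects $\alpha_i(t+1)$ according to $x_i(t)$ with probability $1-\lambda$ and uniformly at random from $\mathcal{A}_i$ with probability $\lambda>0$ (it "trembles"), receives $u_i(\alpha(t+1))$, and updates $x_i(t+1)=x_i(t)+\epsilon\,u_i(\alpha(t+1))\,[e_{\alpha_i(t+1)}-x_i(t)]$ with constant step size $\epsilon>0$ small enough that $0<\epsilon u_i(\alpha)<1$ for all $i,\alpha$. The state space is $\mathcal{Z}=\mathcal{A}\times\mathcal{X}$, $\mathcal{X}=\prod_i\Delta(|\mathcal{A}_i|)$;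 $P_\lambda$ is the transition probability function (t.p.f.) of this Markov chain and $P$ the t.p.f. of the unperturbed process ($\lambda=0$). $\mathcal{C}_b(\mathcal{Z})$ is the space of bounded continuous real functions on $\mathcal{Z}$ with sup-norm, $\mathfrak{P}(\mathcal{Z})$ the probability measures on $\mathcal{Z}$ with the weak topology, and an i.p.m. is an invariant probability measure. $\Pi$ is a t.p.f. on $\mathcal{Z}$ such that $\lim_{t\to\infty}\|P^tf-\Pi f\|_\infty=0$ for all $f\in\mathcal{C}_b(\mathcal{Z})$, whose support is contained in the set of pure strategy states (states $(\alpha,x)$ with $x_i=e_{\alpha_i}$ for all $i$). Write $P_\lambda=(1-\varphi(\lambda))P+\varphi(\lambda)Q_\lambda$, where $\varphi(\lambda)=1-(1-\lambda)^n$ is the probability that at least one agent trembles and $Q_\lambda$ is the t.p.f. when at least one agent trembles; further $Q_\lambda=(1-\psi(\lambda))Q+\psi(\lambda)Q^*$, where $Q$ is the t.p.f. when exactly one agent trembles, $Q^*$ the t.p.f. when at least two tremble, and $\psi(\lambda)=1-\frac{n\lambda(1-\lambda)^{n-1}}{1-(1-\lambda)^n}\to 0$ as $\lambda\downarrow 0$. Define the resolvent $R_\lambda=\varphi(\lambda)\sum_{t=0}^\infty(1-\varphi(\lambda))^tP^t$ and the lifted t.p.f. $P^L_\lambda=Q_\lambda R_\lambda$. *)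

theory Defs
  imports "HOL-Probability.Probability"
begin

text \<open>Agents are 0,...,n-1; agent i has actions 0,...,m i - 1.
  A state is a pair (alpha, x) of an action profile and a strategy profile.
  Functions are extensional (value undefined outside the agent range).
  The state type carries the product topology (Function_Topology), which on the
  state set coincides with the usual topology of A times X (A discrete, X Euclidean).\<close>

type_synonym state = "(nat \<Rightarrow> nat) \<times> (nat \<Rightarrow> nat \<Rightarrow> real)"

definition profiles :: "nat \<Rightarrow> (nat \<Rightarrow> nat) \<Rightarrow> (nat \<Rightarrow> nat) set" where
  "profiles n m = PiE {..<n} (\<lambda>i. {..<m i})"

definition strat_simplex :: "nat \<Rightarrow> (nat \<Rightarrow> real) set" where
  "strat_simplex k = {v. (\<forall>j<k. 0 \<le> v j) \<and> (\<forall>j\<ge>k. v j = 0) \<and> sum v {..<k} = 1}"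

definition strategies :: "nat \<Rightarrow> (nat \<Rightarrow> nat) \<Rightarrow> (nat \<Rightarrow> nat \<Rightarrow> real) set" where
  "strategies n m = PiE {..<n} (\<lambda>i. strat_simplex (m i))"

definition states :: "nat \<Rightarrow> (nat \<Rightarrow> nat) \<Rightarrow> state set" where
  "states n m = profiles n m \<times> strategies n m"

definition unitvec :: "nat \<Rightarrow> nat \<Rightarrow> real" where
  "unitvec j = (\<lambda>k. if k = j then 1 else 0)"

definition pure_states :: "nat \<Rightarrow> (nat \<Rightarrow> nat) \<Rightarrow> state set" where
  "pure_states n m = {z \<in> states n m. \<forall>i<n. snd z i = unitvec (fst z i)}"

definition update :: "nat \<Rightarrow> (nat \<Rightarrow> (nat \<Rightarrow> nat) \<Rightarrow> real) \<Rightarrow> real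
    \<Rightarrow> (nat \<Rightarrow> nat \<Rightarrow> real) \<Rightarrow> (nat \<Rightarrow> nat) \<Rightarrow> (nat \<Rightarrow> nat \<Rightarrow> real)" where
  "update n u eps x a =
     restrict (\<lambda>i k. x i k + eps * u i a * (unitvec (a i) k - x i k)) {..<n}"

definition strat_pmf :: "nat \<Rightarrow> (nat \<Rightarrow> real) \<Rightarrow> nat pmf" where
  "strat_pmf k v = embed_pmf (\<lambda>j. if j < k then v j else 0)"

definition Plam :: "nat \<Rightarrow> (nat \<Rightarrow> nat) \<Rightarrow> (nat \<Rightarrow> (nat \<Rightarrow> nat) \<Rightarrow> real) \<Rightarrow> real
    \<Rightarrow> real \<Rightarrow> state \<Rightarrow> state pmf" where
  "Plam n m u eps lam z =
     map_pmf (\<lambda>a. (a, update n u eps (snd z) a))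
       (Pi_pmf {..<n} undefined
          (\<lambda>i. bind_pmf (bernoulli_pmf lam)
                 (\<lambda>b. if b then pmf_of_set {..<m i} else strat_pmf (m i) (snd z i))))"

definition step :: "nat \<Rightarrow> (nat \<Rightarrow> nat) \<Rightarrow> (nat \<Rightarrow> (nat \<Rightarrow> nat) \<Rightarrow> real) \<Rightarrow> real
    \<Rightarrow> nat set \<Rightarrow> state \<Rightarrow> state pmf" where
  "step n m u eps S z =
     map_pmf (\<lambda>a. (a, update n u eps (snd z) a))
       (Pi_pmf {..<n} undefined
          (\<lambda>i. if i \<in> S then pmf_of_set {..<m i} else strat_pmf (m i) (snd z i)))"

definition tremble_pmf :: "nat \<Rightarrow> real \<Rightarrow> nat set pmf" where
  "tremble_pmf n lam =
     map_pmf (\<lambda>b. {i \<in> {..<n}. b i}) (Pi_pmf {..<n} False (\<lambda>_. bernoulli_pmf lam))"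

definition Qlam :: "nat \<Rightarrow> (nat \<Rightarrow> nat) \<Rightarrow> (nat \<Rightarrow> (nat \<Rightarrow> nat) \<Rightarrow> real) \<Rightarrow> real
    \<Rightarrow> real \<Rightarrow> state \<Rightarrow> state pmf" where
  "Qlam n m u eps lam z =
     bind_pmf (cond_pmf (tremble_pmf n lam) {S. S \<noteq> {}}) (\<lambda>S. step n m u eps S z)"

definition Qone :: "nat \<Rightarrow> (nat \<Rightarrow> nat) \<Rightarrow> (nat \<Rightarrow> (nat \<Rightarrow> nat) \<Rightarrow> real) \<Rightarrow> real
    \<Rightarrow> state \<Rightarrow> state pmf" where
  "Qone n m u eps z =
     bind_pmf (pmf_of_set ((\<lambda>k. {k}) ` {..<n})) (\<lambda>S. step n m u eps S z)"

definition kcomp :: "('a \<Rightarrow> 'b pmf) \<Rightarrow> ('b \<Rightarrow> 'c pmf) \<Rightarrow> 'a \<Rightarrow> 'c pmf" where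
  "kcomp K L z = bind_pmf (K z) L"

fun kpow :: "('a \<Rightarrow> 'a pmf) \<Rightarrow> nat \<Rightarrow> 'a \<Rightarrow> 'a pmf" where
  "kpow K 0 = return_pmf"
| "kpow K (Suc t) = kcomp (kpow K t) K"

definition kapply :: "('a \<Rightarrow> 'b pmf) \<Rightarrow> ('b \<Rightarrow> real) \<Rightarrow> 'a \<Rightarrow> real" where
  "kapply K f z = measure_pmf.expectation (K z) f"

definition phi :: "nat \<Rightarrow> real \<Rightarrow> real" where
  "phi n lam = 1 - (1 - lam) ^ n"

text \<open>Resolvent phi * sum_t (1-phi)^t P^t, as a geometric mixture of the P^t.\<close>
definition Rlam :: "nat \<Rightarrow> (nat \<Rightarrow> nat) \<Rightarrow> (nat \<Rightarrow> (nat \<Rightarrow> nat) \<Rightarrow> real) \<Rightarrow> real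
    \<Rightarrow> real \<Rightarrow> state \<Rightarrow> state pmf" where
  "Rlam n m u eps lam z =
     bind_pmf (geometric_pmf (phi n lam)) (\<lambda>t. kpow (Plam n m u eps 0) t z)"

definition PL :: "nat \<Rightarrow> (nat \<Rightarrow> nat) \<Rightarrow> (nat \<Rightarrow> (nat \<Rightarrow> nat) \<Rightarrow> real) \<Rightarrow> real
    \<Rightarrow> real \<Rightarrow> state \<Rightarrow> state pmf" where
  "PL n m u eps lam = kcomp (Qlam n m u eps lam) (Rlam n m u eps lam)"

definition Cb :: "'a::topological_space set \<Rightarrow> ('a \<Rightarrow> real) \<Rightarrow> bool" where
  "Cb Z f \<longleftrightarrow> continuous_on Z f \<and> bounded (f ` Z)"

definition supnorm :: "'a set \<Rightarrow> ('a \<Rightarrow> real) \<Rightarrow> real" where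
  "supnorm Z g = (SUP z\<in>Z. \<bar>g z\<bar>)"

definition prob_measures :: "'a::topological_space set \<Rightarrow> 'a measure set" where
  "prob_measures Z = {M. prob_space M \<and> sets M = sets (restrict_space borel Z)}"

definition ipm :: "'a::topological_space set \<Rightarrow> ('a \<Rightarrow> 'a pmf) \<Rightarrow> 'a measure \<Rightarrow> bool" where
  "ipm Z K M \<longleftrightarrow> M \<in> prob_measures Z \<and>
     (\<forall>B \<in> sets M. (\<integral>\<^sup>+ z. emeasure (measure_pmf (K z)) B \<partial>M) = emeasure M B)"

definition weak_conv_Cb :: "'a::topological_space set \<Rightarrow> (nat \<Rightarrow> 'a measure) \<Rightarrow> 'a measure \<Rightarrow> bool" where
  "weak_conv_Cb Z Ms M \<longleftrightarrow>
     (\<forall>f. Cb Z f \<longrightarrow> (\<lambda>k. \<integral> z. f z \<partial>Ms k) \<longlonglongrightarrow> (\<integral> z. f z \<partial>M))"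

end

theory Submission
  imports Defs
begin

text \<open>Write \<open>P\<^sub>\<lambda> = (1 - \<phi>) P + \<phi> Q\<^sub>\<lambda>\<close> with \<open>\<phi> = \<phi>(\<lambda>) \<rightarrow> 0\<close>. The resolvent \<open>R\<^sub>\<lambda>\<close> averages
  \<open>P\<^sup>t\<close> over a geometric time of parameter \<open>\<phi>\<close>, so (a) follows from \<open>P\<^sup>t f \<rightarrow> \<Pi> f\<close> uniformly.
  Given that somebody trembles, exactly one agent does so with probability \<open>1 - O(\<lambda>)\<close>, hence
  \<open>Q\<^sub>\<lambda> = Q + O(\<lambda>)\<close> and (b) follows from (a). For (c), iterating
  \<open>\<mu> = \<mu> P\<^sub>\<lambda> = (1 - \<phi>) \<mu> P + \<phi> \<mu> Q\<^sub>\<lambda>\<close> gives \<open>\<mu> = \<Sum>\<^sub>t \<phi> (1 - \<phi>)\<^sup>t \<mu> Q\<^sub>\<lambda> P\<^sup>t = \<mu> Q\<^sub>\<lambda> R\<^sub>\<lambda>\<close>.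
  For (d), pass to the limit in \<open>\<integral> f d\<mu>\<^sub>\<lambda> = \<integral> P\<^sup>L\<^sub>\<lambda> f d\<mu>\<^sub>\<lambda>\<close> using (b) and weak convergence;
  this needs \<open>Q \<Pi> f\<close> continuous, which holds because \<open>\<Pi>\<close> is a uniform limit of the Feller
  kernels \<open>P\<^sup>t\<close>, and that bounded continuous functions determine measures on the (metrizable)
  state space.\<close>

section \<open>Kernels on a subset of a topological space\<close>

abbreviation borel_on :: "'a::topological_space set \<Rightarrow> 'a measure" where
  "borel_on Z \<equiv> restrict_space borel Z"

lemma space_borel_on [simp]: "space (borel_on Z) = Z"
  by (simp add: space_restrict_space)

lemma sets_borel_on_subset: "B \<in> sets (borel_on Z) \<Longrightarrow> B \<subseteq> Z"
  using sets.sets_into_space[of B "borel_on Z"] by simp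

definition kernel_closed :: "'a set \<Rightarrow> ('a \<Rightarrow> 'a pmf) \<Rightarrow> bool" where
  "kernel_closed Z K \<longleftrightarrow> (\<forall>z\<in>Z. set_pmf (K z) \<subseteq> Z)"

definition kernel_measurable :: "'a::topological_space set \<Rightarrow> ('a \<Rightarrow> 'a pmf) \<Rightarrow> bool" where
  "kernel_measurable Z K \<longleftrightarrow>
     (\<forall>B\<in>sets (borel_on Z). (\<lambda>z. emeasure (K z) B) \<in> borel_measurable (borel_on Z))"

definition feller :: "'a::topological_space set \<Rightarrow> ('a \<Rightarrow> 'a pmf) \<Rightarrow> bool" where
  "feller Z K \<longleftrightarrow> (\<forall>f. Cb Z f \<longrightarrow> continuous_on Z (kapply K f))"

text \<open>The law of \<open>K z\<close> as a measure on the Borel sets of \<open>Z\<close>, so that the measure-theoretic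
  library (\<open>bind\<close>, \<open>subprob_algebra\<close>) applies.\<close>
definition kernel_measure :: "'a::topological_space set \<Rightarrow> ('a \<Rightarrow> 'a pmf) \<Rightarrow> 'a \<Rightarrow> 'a measure" where
  "kernel_measure Z K z = distr (restrict_space (K z) Z) (borel_on Z) (\<lambda>x. x)"

lemma measurable_ident_restrict_pmf: "(\<lambda>x. x) \<in> restrict_space (measure_pmf p) Z \<rightarrow>\<^sub>M borel_on Z"
proof (rule measurableI)
  fix A assume "A \<in> sets (borel_on Z)"
  then have "A \<subseteq> Z" by (rule sets_borel_on_subset)
  then show "(\<lambda>x. x) -` A \<inter> space (restrict_space (measure_pmf p) Z) \<in> sets (restrict_space (measure_pmf p) Z)"
    unfolding sets_restrict_space space_restrict_space by (auto intro!: image_eqI[where x=A])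
qed (simp add: space_restrict_space)

lemma sets_kernel_measure [simp]: "sets (kernel_measure Z K z) = sets (borel_on Z)"
  by (simp add: kernel_measure_def)

lemma space_kernel_measure [simp]: "space (kernel_measure Z K z) = Z"
  by (simp add: kernel_measure_def)

lemma emeasure_kernel_measure:
  assumes "B \<in> sets (borel_on Z)"
  shows "emeasure (kernel_measure Z K z) B = emeasure (K z) B"
  using assms sets_borel_on_subset[OF assms] unfolding kernel_measure_def
  by (simp add: emeasure_distr[OF measurable_ident_restrict_pmf] space_restrict_space
      emeasure_restrict_space Int_absorb2)

lemma nn_integral_kernel_measure:
  assumes "g \<in> borel_measurable (borel_on Z)" and "set_pmf (K z) \<subseteq> Z"
  shows "(\<integral>\<^sup>+w. g w \<partial>kernel_measure Z K z) = (\<integral>\<^sup>+w. g w \<partial>K z)"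
proof -
  have "(\<integral>\<^sup>+w. g w \<partial>kernel_measure Z K z) = (\<integral>\<^sup>+w. g w * indicator Z w \<partial>K z)"
    unfolding kernel_measure_def using assms(1)
    by (simp add: nn_integral_distr[OF measurable_ident_restrict_pmf] nn_integral_restrict_space
        mult.commute)
  also have "\<dots> = (\<integral>\<^sup>+w. g w \<partial>K z)"
    using assms(2) by (intro nn_integral_cong_AE) (auto simp: AE_measure_pmf_iff)
  finally show ?thesis .
qed

lemma integral_kernel_measure:
  fixes g :: "'a::topological_space \<Rightarrow> real"
  assumes "g \<in> borel_measurable (borel_on Z)" and "set_pmf (K z) \<subseteq> Z"
  shows "integral\<^sup>L (kernel_measure Z K z) g = kapply K g z"
proof -
  have "integral\<^sup>L (kernel_measure Z K z) g = (\<integral>w. indicator Z w *\<^sub>R g w \<partial>K z)"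
    unfolding kernel_measure_def using assms(1)
    by (simp add: integral_distr[OF measurable_ident_restrict_pmf] integral_restrict_space)
  also have "\<dots> = kapply K g z"
    unfolding kapply_def using assms(2) by (intro integral_cong_AE) (auto simp: AE_measure_pmf_iff)
  finally show ?thesis .
qed

lemma prob_space_kernel_measure:
  assumes "set_pmf (K z) \<subseteq> Z"
  shows "prob_space (kernel_measure Z K z)"
proof -
  have "emeasure (K z) Z = 1"
    using assms by (simp add: measure_pmf.emeasure_eq_1_AE AE_measure_pmf_iff subset_iff)
  then have "prob_space (restrict_space (K z) Z)"
    by (intro prob_space_restrict_space) auto
  then show ?thesis
    unfolding kernel_measure_def by (intro prob_space.prob_space_distr measurable_ident_restrict_pmf)
qed

lemma measurable_kernel_measure:
  assumes "kernel_closed Z K" "kernel_measurable Z K"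
  shows "kernel_measure Z K \<in> borel_on Z \<rightarrow>\<^sub>M subprob_algebra (borel_on Z)"
proof (rule measurable_subprob_algebra)
  fix a assume "a \<in> space (borel_on Z)"
  then show "subprob_space (kernel_measure Z K a)"
    using assms(1) by (auto simp: kernel_closed_def prob_space_imp_subprob_space prob_space_kernel_measure)
next
  fix A assume "A \<in> sets (borel_on Z)"
  then show "(\<lambda>a. emeasure (kernel_measure Z K a) A) \<in> borel_measurable (borel_on Z)"
    using assms(2) by (simp add: emeasure_kernel_measure kernel_measurable_def)
qed simp

lemma borel_measurable_nn_integral_kernel:
  assumes "kernel_closed Z K" "kernel_measurable Z K" and g: "g \<in> borel_measurable (borel_on Z)"
  shows "(\<lambda>z. \<integral>\<^sup>+w. g w \<partial>K z) \<in> borel_measurable (borel_on Z)"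
proof -
  have "(\<lambda>z. \<integral>\<^sup>+w. g w \<partial>kernel_measure Z K z) \<in> borel_measurable (borel_on Z)"
    by (rule measurable_compose[OF measurable_kernel_measure[OF assms(1,2)]
          nn_integral_measurable_subprob_algebra[OF g]])
  then show ?thesis
    by (rule measurable_cong[THEN iffD1, rotated])
       (use assms(1) in \<open>auto simp: kernel_closed_def nn_integral_kernel_measure[OF g]\<close>)
qed

lemma borel_measurable_kapply:
  fixes g :: "'a::topological_space \<Rightarrow> real"
  assumes "kernel_closed Z K" "kernel_measurable Z K" and g: "g \<in> borel_measurable (borel_on Z)"
  shows "kapply K g \<in> borel_measurable (borel_on Z)"
proof -
  have "(\<lambda>z. integral\<^sup>L (kernel_measure Z K z) g) \<in> borel_measurable (borel_on Z)"
    by (rule measurable_compose[OF measurable_kernel_measure[OF assms(1,2)]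
          integral_measurable_subprob_algebra[OF g]])
  then show ?thesis
    by (rule measurable_cong[THEN iffD1, rotated])
       (use assms(1) in \<open>auto simp: kernel_closed_def integral_kernel_measure[OF g]\<close>)
qed

lemma ipm_iff_bind_kernel_measure:
  assumes M: "M \<in> prob_measures Z" and K: "kernel_closed Z K" "kernel_measurable Z K"
  shows "ipm Z K M \<longleftrightarrow> bind M (kernel_measure Z K) = M"
proof -
  have sM: "sets M = sets (borel_on Z)" and "prob_space M"
    using M by (auto simp: prob_measures_def)
  then have ne: "space M \<noteq> {}" using prob_space.not_empty by blast
  have km: "kernel_measure Z K \<in> M \<rightarrow>\<^sub>M subprob_algebra (borel_on Z)"
    using measurable_cong_sets[OF sM refl] measurable_kernel_measure[OF K] by blast
  have sets_bind: "sets (bind M (kernel_measure Z K)) = sets M"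
    using sM ne by (subst sets_bind) auto
  have emeasure_bind: "emeasure (bind M (kernel_measure Z K)) B = (\<integral>\<^sup>+z. emeasure (K z) B \<partial>M)"
    if "B \<in> sets M" for B
    using that sM by (simp add: emeasure_bind[OF ne km] emeasure_kernel_measure)
  show ?thesis
  proof
    assume "ipm Z K M"
    then show "bind M (kernel_measure Z K) = M"
      by (intro measure_eqI) (use sets_bind emeasure_bind in \<open>auto simp: ipm_def\<close>)
  next
    assume "bind M (kernel_measure Z K) = M"
    then show "ipm Z K M" using M emeasure_bind unfolding ipm_def by metis
  qed
qed

lemma integral_bind_kernel_measure:
  fixes g :: "'a::topological_space \<Rightarrow> real"
  assumes M: "M \<in> prob_measures Z" and K: "kernel_closed Z K" "kernel_measurable Z K"
    and g: "g \<in> borel_measurable (borel_on Z)" and g_bounded: "\<And>z. z \<in> Z \<Longrightarrow> \<bar>g z\<bar> \<le> C"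
  shows "integral\<^sup>L (bind M (kernel_measure Z K)) g = (\<integral>z. kapply K g z \<partial>M)"
proof -
  have sM: "sets M = sets (borel_on Z)" and pM: "prob_space M"
    using M by (auto simp: prob_measures_def)
  have spM: "space M = Z" using sets_eq_imp_space_eq[OF sM] by simp
  have km: "kernel_measure Z K \<in> M \<rightarrow>\<^sub>M subprob_algebra (borel_on Z)"
    using measurable_cong_sets[OF sM refl] measurable_kernel_measure[OF K] by blast
  have "integral\<^sup>L (bind M (kernel_measure Z K)) g = (\<integral>z. integral\<^sup>L (kernel_measure Z K z) g \<partial>M)"
  proof (rule integral_bind[OF g _ km])
    show "finite_measure M" using pM by (rule prob_space.axioms(1))
    show "AE x in M. emeasure (kernel_measure Z K x) (space (kernel_measure Z K x)) \<le> ennreal 1"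
    proof (rule AE_I2)
      fix x assume "x \<in> space M"
      then have "prob_space (kernel_measure Z K x)"
        using K(1) spM by (intro prob_space_kernel_measure) (auto simp: kernel_closed_def)
      then show "emeasure (kernel_measure Z K x) (space (kernel_measure Z K x)) \<le> ennreal 1"
        by (simp add: prob_space.emeasure_space_1 del: space_kernel_measure)
    qed
  qed (use g_bounded in simp)
  also have "\<dots> = (\<integral>z. kapply K g z \<partial>M)"
    using K(1) by (intro Bochner_Integration.integral_cong)
      (auto simp: spM kernel_closed_def integral_kernel_measure[OF g])
  finally show ?thesis .
qed

lemma integral_kapply_ipm:
  fixes g :: "'a::topological_space \<Rightarrow> real"
  assumes "M \<in> prob_measures Z" "kernel_closed Z K" "kernel_measurable Z K" "ipm Z K M"
    and "g \<in> borel_measurable (borel_on Z)" "\<And>z. z \<in> Z \<Longrightarrow> \<bar>g z\<bar> \<le> C"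
  shows "(\<integral>z. kapply K g z \<partial>M) = integral\<^sup>L M g"
  using integral_bind_kernel_measure[OF assms(1-3,5,6)] ipm_iff_bind_kernel_measure[OF assms(1-3)]
    assms(4) by simp

lemma integrable_pmf_bounded_on:
  fixes g :: "'a \<Rightarrow> real"
  assumes "set_pmf p \<subseteq> Z" "\<And>w. w \<in> Z \<Longrightarrow> \<bar>g w\<bar> \<le> C"
  shows "integrable (measure_pmf p) g"
  by (rule measure_pmf.integrable_const_bound[where B=C]) (use assms in \<open>auto simp: AE_measure_pmf_iff\<close>)

lemma abs_expectation_le:
  fixes g :: "'a \<Rightarrow> real"
  assumes "set_pmf p \<subseteq> Z" "\<And>w. w \<in> Z \<Longrightarrow> \<bar>g w\<bar> \<le> C"
  shows "\<bar>measure_pmf.expectation p g\<bar> \<le> C"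
proof -
  have "\<bar>measure_pmf.expectation p g\<bar> \<le> measure_pmf.expectation p (\<lambda>w. \<bar>g w\<bar>)"
    by (rule integral_abs_bound)
  also have "\<dots> \<le> C"
    by (rule measure_pmf.integral_le_const)
       (use assms in \<open>auto simp: AE_measure_pmf_iff intro!: integrable_pmf_bounded_on[where C=C]\<close>)
  finally show ?thesis .
qed

lemma expectation_bind_pmf:
  fixes g :: "'a \<Rightarrow> real"
  assumes K: "\<And>y. y \<in> set_pmf p \<Longrightarrow> set_pmf (K y) \<subseteq> Z" and g: "\<And>w. w \<in> Z \<Longrightarrow> \<bar>g w\<bar> \<le> C"
  shows "measure_pmf.expectation (bind_pmf p K) g =
         measure_pmf.expectation p (\<lambda>y. measure_pmf.expectation (K y) g)"
proof -
  define g' where "g' w = (if w \<in> Z then g w else 0)" for w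
  obtain y w where "y \<in> set_pmf p" "w \<in> set_pmf (K y)"
    using set_pmf_not_empty by (metis ex_in_conv)
  then have C: "0 \<le> C" using g[of w] K by force
  have "measure_pmf.expectation (bind_pmf p K) g' =
        (\<integral>y. measure_pmf.expectation (K y) g' \<partial>measure_pmf p)"
    unfolding measure_pmf_bind
  proof (rule integral_bind[where K="count_space UNIV" and B=C and B'=1])
    show "(\<lambda>x. measure_pmf (K x)) \<in> measure_pmf p \<rightarrow>\<^sub>M subprob_algebra (count_space UNIV)"
      using measurable_measure_pmf[of K] by (simp add: measurable_cong_sets)
  qed (use g C in \<open>auto simp: g'_def measure_pmf.emeasure_space_1 prob_space_measure_pmf
      prob_space.axioms(1)\<close>)
  moreover have "measure_pmf.expectation (bind_pmf p K) g = measure_pmf.expectation (bind_pmf p K) g'"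
    by (intro integral_cong_AE) (use K in \<open>auto simp: AE_measure_pmf_iff g'_def\<close>)
  moreover have "(\<integral>y. measure_pmf.expectation (K y) g' \<partial>measure_pmf p) =
                 measure_pmf.expectation p (\<lambda>y. measure_pmf.expectation (K y) g)"
    by (intro integral_cong_AE) (auto simp: AE_measure_pmf_iff g'_def dest!: K intro!: integral_cong_AE)
  ultimately show ?thesis by simp
qed

lemma measure_bind_pmf:
  "measure_pmf.prob (bind_pmf p K) B = measure_pmf.expectation p (\<lambda>w. measure_pmf.prob (K w) B)"
proof -
  have int: "integrable (measure_pmf p) (\<lambda>w. measure_pmf.prob (K w) B)"
    by (rule measure_pmf.integrable_const_bound[where B=1]) auto
  have "emeasure (bind_pmf p K) B = (\<integral>\<^sup>+w. ennreal (measure_pmf.prob (K w) B) \<partial>p)"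
    by (subst emeasure_bind_pmf) (simp add: measure_pmf.emeasure_eq_measure)
  also have "\<dots> = ennreal (measure_pmf.expectation p (\<lambda>w. measure_pmf.prob (K w) B))"
    by (rule nn_integral_eq_integral[OF int]) auto
  finally show ?thesis
    by (simp add: measure_pmf.emeasure_eq_measure)
qed

lemma abs_expectation_diff_pmf_of_set_le:
  fixes H :: "'a \<Rightarrow> real" and c C :: real
  assumes A: "finite A" "A \<noteq> {}" and p: "finite (set_pmf p)" "\<And>x. x \<in> A \<Longrightarrow> pmf p x = c"
    and H: "\<And>x. \<bar>H x\<bar> \<le> C"
  shows "\<bar>measure_pmf.expectation p H - measure_pmf.expectation (pmf_of_set A) H\<bar> \<le>
         2 * C * (1 - card A * c)"
proof -
  define R where "R = set_pmf p - A"
  have fin: "finite R" using p(1) by (simp add: R_def)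
  have disj: "R \<inter> A = {}" by (auto simp: R_def)
  have sub: "set_pmf p \<subseteq> R \<union> A" by (auto simp: R_def)
  have "measure_pmf.expectation p H = (\<Sum>x\<in>R \<union> A. pmf p x * H x)"
    using fin A(1) sub by (subst integral_measure_pmf[where A="R \<union> A"]) auto
  then have E: "measure_pmf.expectation p H = (\<Sum>x\<in>R. pmf p x * H x) + (\<Sum>x\<in>A. c * H x)"
    using p(2) by (simp add: sum.union_disjoint[OF fin A(1) disj])
  have "(\<Sum>x\<in>R \<union> A. pmf p x) = 1"
    using fin A(1) sub by (intro sum_pmf_eq_1) auto
  then have "(\<Sum>x\<in>R. pmf p x) + card A * c = 1"
    using p(2) by (simp add: sum.union_disjoint[OF fin A(1) disj])
  then have rest: "(\<Sum>x\<in>R. pmf p x) = 1 - card A * c" and le1: "card A * c \<le> 1"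
    using sum_nonneg[of R "pmf p"] by auto
  have b1: "\<bar>\<Sum>x\<in>R. pmf p x * H x\<bar> \<le> C * (1 - card A * c)"
  proof -
    have "\<bar>\<Sum>x\<in>R. pmf p x * H x\<bar> \<le> (\<Sum>x\<in>R. pmf p x * C)"
      using H by (intro order_trans[OF sum_abs sum_mono]) (auto simp: abs_mult intro: mult_left_mono)
    also have "\<dots> = C * (1 - card A * c)"
      using rest by (simp add: sum_distrib_left[symmetric] mult.commute)
    finally show ?thesis .
  qed
  have b2: "\<bar>\<Sum>x\<in>A. (c - 1 / card A) * H x\<bar> \<le> C * (1 - card A * c)"
  proof -
    have "\<bar>\<Sum>x\<in>A. (c - 1 / card A) * H x\<bar> \<le> (\<Sum>x\<in>A. \<bar>c - 1 / card A\<bar> * C)"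
      using H by (intro order_trans[OF sum_abs sum_mono]) (auto simp: abs_mult intro: mult_left_mono)
    also have "\<dots> = \<bar>card A * (c - 1 / card A)\<bar> * C"
      by (simp add: abs_mult)
    also have "\<dots> = \<bar>card A * c - 1\<bar> * C"
      using A by (simp add: right_diff_distrib)
    finally show ?thesis using le1 by (simp add: mult.commute)
  qed
  have "measure_pmf.expectation p H - measure_pmf.expectation (pmf_of_set A) H =
        (\<Sum>x\<in>R. pmf p x * H x) + (\<Sum>x\<in>A. (c - 1 / card A) * H x)"
    using A by (simp add: E integral_pmf_of_set sum_divide_distrib sum_subtractf left_diff_distrib)
  then show ?thesis
    using b1 b2 abs_triangle_ineq[of "\<Sum>x\<in>R. pmf p x * H x" "\<Sum>x\<in>A. (c - 1 / card A) * H x"]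
    by linarith
qed

lemma bernoulli_pmf_0: "bernoulli_pmf 0 = return_pmf False"
proof (rule pmf_eqI)
  fix b :: bool
  show "pmf (bernoulli_pmf 0) b = pmf (return_pmf False) b" by (cases b) auto
qed

lemma abs_kapply_le:
  assumes "kernel_closed Z K" "z \<in> Z" "\<And>w. w \<in> Z \<Longrightarrow> \<bar>f w\<bar> \<le> C"
  shows "\<bar>kapply K f z\<bar> \<le> C"
  unfolding kapply_def by (rule abs_expectation_le[where Z=Z]) (use assms in \<open>auto simp: kernel_closed_def\<close>)

lemma kapply_diff:
  assumes "kernel_closed Z K" "z \<in> Z"
    and "\<And>w. w \<in> Z \<Longrightarrow> \<bar>f w\<bar> \<le> C" "\<And>w. w \<in> Z \<Longrightarrow> \<bar>g w\<bar> \<le> C"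
  shows "kapply K (\<lambda>w. f w - g w) z = kapply K f z - kapply K g z"
  using assms unfolding kapply_def kernel_closed_def
  by (intro Bochner_Integration.integral_diff integrable_pmf_bounded_on[where Z=Z and C=C]) auto

lemma kernel_closed_kcomp: "kernel_closed Z K \<Longrightarrow> kernel_closed Z L \<Longrightarrow> kernel_closed Z (kcomp K L)"
  by (fastforce simp: kernel_closed_def kcomp_def)

lemma kernel_measurable_kcomp:
  "kernel_closed Z K \<Longrightarrow> kernel_measurable Z K \<Longrightarrow> kernel_measurable Z L \<Longrightarrow>
   kernel_measurable Z (kcomp K L)"
  unfolding kernel_measurable_def kcomp_def emeasure_bind_pmf
  by (auto intro!: borel_measurable_nn_integral_kernel simp: kernel_measurable_def)

lemma kapply_kcomp:
  assumes "kernel_closed Z K" "kernel_closed Z L" "z \<in> Z" "\<And>w. w \<in> Z \<Longrightarrow> \<bar>g w\<bar> \<le> C"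
  shows "kapply (kcomp K L) g z = kapply K (kapply L g) z"
  unfolding kapply_def kcomp_def
  by (rule expectation_bind_pmf[where Z=Z and C=C]) (use assms in \<open>auto simp: kernel_closed_def\<close>)

lemma kpow_Suc_left: "kpow K (Suc t) = kcomp K (kpow K t)"
proof (induction t)
  case 0
  show ?case by (simp add: kcomp_def fun_eq_iff bind_return_pmf bind_return_pmf')
next
  case (Suc t)
  have "kpow K (Suc (Suc t)) = kcomp (kcomp K (kpow K t)) K"
    using Suc by simp
  also have "\<dots> = kcomp K (kpow K (Suc t))"
    unfolding kpow.simps kcomp_def by (simp add: bind_assoc_pmf)
  finally show ?case .
qed

lemma kernel_closed_kpow: "kernel_closed Z K \<Longrightarrow> kernel_closed Z (kpow K t)"
  by (induction t) (simp_all add: kernel_closed_kcomp, simp add: kernel_closed_def)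

lemma kernel_measurable_kpow:
  assumes "kernel_closed Z K" "kernel_measurable Z K"
  shows "kernel_measurable Z (kpow K t)"
proof (induction t)
  case 0
  have "(\<lambda>z. emeasure (return_pmf z) B) = indicator B" for B :: "'a set"
    by (auto simp: fun_eq_iff)
  then show ?case by (simp add: kernel_measurable_def)
next
  case (Suc t)
  then show ?case
    using assms by (auto intro: kernel_measurable_kcomp kernel_closed_kpow)
qed

lemma kernel_closed_mixture:
  "(\<And>s. s \<in> set_pmf p \<Longrightarrow> kernel_closed Z (K s)) \<Longrightarrow> kernel_closed Z (\<lambda>z. bind_pmf p (\<lambda>s. K s z))"
  by (fastforce simp: kernel_closed_def)

lemma kernel_measurable_finite_mixture:
  assumes "finite (set_pmf p)" "\<And>s. s \<in> set_pmf p \<Longrightarrow> kernel_measurable Z (K s)"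
  shows "kernel_measurable Z (\<lambda>z. bind_pmf p (\<lambda>s. K s z))"
  unfolding kernel_measurable_def emeasure_bind_pmf
proof safe
  fix B assume "B \<in> sets (borel_on Z)"
  then have "(\<lambda>z. \<Sum>s\<in>set_pmf p. emeasure (K s z) B * ennreal (pmf p s)) \<in> borel_measurable (borel_on Z)"
    using assms(2) by (intro borel_measurable_sum borel_measurable_times_ennreal)
      (auto simp: kernel_measurable_def)
  then show "(\<lambda>z. \<integral>\<^sup>+s. emeasure (K s z) B \<partial>p) \<in> borel_measurable (borel_on Z)"
    by (simp add: nn_integral_measure_pmf_finite[OF assms(1)])
qed

lemma kernel_measurable_nat_mixture:
  fixes p :: "nat pmf"
  assumes "\<And>s. kernel_measurable Z (K s)"
  shows "kernel_measurable Z (\<lambda>z. bind_pmf p (\<lambda>s. K s z))"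
  unfolding kernel_measurable_def emeasure_bind_pmf
proof safe
  fix B assume "B \<in> sets (borel_on Z)"
  then have "(\<lambda>z. \<Sum>s. ennreal (pmf p s) * emeasure (K s z) B) \<in> borel_measurable (borel_on Z)"
    using assms by (intro borel_measurable_suminf_order borel_measurable_times_ennreal)
      (auto simp: kernel_measurable_def)
  then show "(\<lambda>z. \<integral>\<^sup>+s. emeasure (K s z) B \<partial>p) \<in> borel_measurable (borel_on Z)"
    by (simp add: nn_integral_measure_pmf nn_integral_count_space_nat)
qed

lemma Cb_bounded: "Cb Z f \<Longrightarrow> \<exists>C. \<forall>z\<in>Z. \<bar>f z\<bar> \<le> C"
  unfolding Cb_def bounded_real by auto

lemma borel_measurable_Cb: "Cb Z f \<Longrightarrow> f \<in> borel_measurable (borel_on Z)"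
  unfolding Cb_def by (auto intro: borel_measurable_continuous_on_restrict)

lemma Cb_kapply:
  assumes "kernel_closed Z K" "feller Z K" "Cb Z f"
  shows "Cb Z (kapply K f)"
proof -
  obtain C where "\<forall>z\<in>Z. \<bar>f z\<bar> \<le> C" using Cb_bounded[OF assms(3)] by blast
  then have "\<forall>z\<in>Z. \<bar>kapply K f z\<bar> \<le> C"
    using assms(1) by (auto intro!: abs_kapply_le)
  then show ?thesis using assms(2,3) unfolding feller_def Cb_def bounded_real by auto
qed

lemma feller_kcomp:
  assumes "kernel_closed Z K" "kernel_closed Z L" "feller Z K" "feller Z L"
  shows "feller Z (kcomp K L)"
  unfolding feller_def
proof safe
  fix f assume f: "Cb Z f"
  obtain C where C: "\<forall>z\<in>Z. \<bar>f z\<bar> \<le> C" using Cb_bounded[OF f] by blast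
  have "continuous_on Z (kapply K (kapply L f))"
    using assms Cb_kapply[OF assms(2,4) f] by (simp add: feller_def)
  then show "continuous_on Z (kapply (kcomp K L) f)"
    by (rule continuous_on_cong[THEN iffD1, rotated 2])
       (use kapply_kcomp[OF assms(1,2) _, of _ f C] C in auto)
qed

lemma feller_kpow:
  assumes "kernel_closed Z K" "feller Z K"
  shows "feller Z (kpow K t)"
proof (induction t)
  case 0
  show ?case by (simp add: feller_def kapply_def Cb_def)
next
  case (Suc t)
  then show ?case using assms by (auto intro: feller_kcomp kernel_closed_kpow)
qed

section \<open>Uniform convergence and geometric averages\<close>

lemma supnorm_le:
  assumes "Z \<noteq> {}" "\<And>z. z \<in> Z \<Longrightarrow> \<bar>g z\<bar> \<le> c"
  shows "supnorm Z g \<le> c"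
  unfolding supnorm_def using assms by (intro cSUP_least) auto

lemma abs_le_supnorm:
  assumes "\<And>z. z \<in> Z \<Longrightarrow> \<bar>g z\<bar> \<le> c" "z \<in> Z"
  shows "\<bar>g z\<bar> \<le> supnorm Z g"
  unfolding supnorm_def using assms by (intro cSUP_upper) (auto intro!: bdd_aboveI2)

lemma supnorm_cong: "(\<And>z. z \<in> Z \<Longrightarrow> g z = h z) \<Longrightarrow> supnorm Z g = supnorm Z h"
  unfolding supnorm_def by (intro SUP_cong) auto

lemma tendsto_supnorm_zero:
  assumes "Z \<noteq> {}" and bound: "\<forall>\<^sub>F x in F. \<forall>z\<in>Z. \<bar>g x z\<bar> \<le> b x" and "(b \<longlongrightarrow> 0) F"
  shows "((\<lambda>x. supnorm Z (g x)) \<longlongrightarrow> 0) F"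
proof (rule tendsto_sandwich[OF _ _ tendsto_const assms(3)])
  obtain z where "z \<in> Z" using assms(1) by blast
  show "\<forall>\<^sub>F x in F. 0 \<le> supnorm Z (g x)"
  proof (rule eventually_mono[OF bound])
    fix x assume "\<forall>z\<in>Z. \<bar>g x z\<bar> \<le> b x"
    then have "\<bar>g x z\<bar> \<le> supnorm Z (g x)" by (intro abs_le_supnorm[OF _ \<open>z \<in> Z\<close>]) auto
    then show "0 \<le> supnorm Z (g x)" by linarith
  qed
  show "\<forall>\<^sub>F x in F. supnorm Z (g x) \<le> b x"
    by (rule eventually_mono[OF bound]) (simp add: supnorm_le[OF assms(1)])
qed

lemma abs_le_supnorm_kapply_diff:
  assumes "kernel_closed Z K" "kernel_closed Z L" "z \<in> Z" "\<And>w. w \<in> Z \<Longrightarrow> \<bar>f w\<bar> \<le> C"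
  shows "\<bar>kapply K f z - kapply L f z\<bar> \<le> supnorm Z (\<lambda>w. kapply K f w - kapply L f w)"
proof (rule abs_le_supnorm[OF _ assms(3)])
  fix w assume "w \<in> Z"
  then have "\<bar>kapply K f w\<bar> \<le> C" "\<bar>kapply L f w\<bar> \<le> C"
    using abs_kapply_le[OF assms(1)] abs_kapply_le[OF assms(2)] assms(4) by auto
  then show "\<bar>kapply K f w - kapply L f w\<bar> \<le> 2 * C" by linarith
qed

lemma feller_if_uniform_limit:
  assumes "kernel_closed Z K" "\<And>t. kernel_closed Z (Ks t)" "\<And>t. feller Z (Ks t)"
    and lim: "\<And>f. Cb Z f \<Longrightarrow> (\<lambda>t. supnorm Z (\<lambda>z. kapply (Ks t) f z - kapply K f z)) \<longlonglongrightarrow> 0"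
  shows "feller Z K"
  unfolding feller_def
proof safe
  fix f assume f: "Cb Z f"
  obtain C where C: "\<forall>z\<in>Z. \<bar>f z\<bar> \<le> C" using Cb_bounded[OF f] by blast
  have "uniform_limit Z (\<lambda>t. kapply (Ks t) f) (kapply K f) sequentially"
    unfolding uniform_limit_iff
  proof safe
    fix e :: real assume "e > 0"
    show "\<forall>\<^sub>F t in sequentially. \<forall>z\<in>Z. dist (kapply (Ks t) f z) (kapply K f z) < e"
    proof (rule eventually_mono[OF order_tendstoD(2)[OF lim[OF f] \<open>e > 0\<close>]], safe)
      fix t z assume "supnorm Z (\<lambda>z. kapply (Ks t) f z - kapply K f z) < e" "z \<in> Z"
      moreover have "\<bar>kapply (Ks t) f z - kapply K f z\<bar> \<le> supnorm Z (\<lambda>z. kapply (Ks t) f z - kapply K f z)"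
        by (rule abs_le_supnorm_kapply_diff[OF assms(2) assms(1) \<open>z \<in> Z\<close>]) (use C in auto)
      ultimately show "dist (kapply (Ks t) f z) (kapply K f z) < e"
        by (simp add: dist_real_def)
    qed
  qed
  moreover have "\<forall>\<^sub>F t in sequentially. continuous_on Z (kapply (Ks t) f)"
    using assms(3) f by (simp add: feller_def)
  ultimately show "continuous_on Z (kapply K f)"
    by (intro uniform_limit_theorem) auto
qed

text \<open>All but the first \<open>T\<close> terms of the geometric law are small; those carry mass at most \<open>T p\<close>.\<close>
lemma abs_expectation_geometric_le:
  fixes h :: "nat \<Rightarrow> real"
  assumes p: "0 < p" "p \<le> 1" and h: "\<And>t. \<bar>h t\<bar> \<le> B" and tail: "\<And>t. t \<ge> T \<Longrightarrow> \<bar>h t\<bar> \<le> e"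
    and "0 \<le> e"
  shows "\<bar>measure_pmf.expectation (geometric_pmf p) h\<bar> \<le> e + B * T * p"
proof -
  have B: "0 \<le> B" using h[of 0] by linarith
  have int: "integrable (measure_pmf (geometric_pmf p)) h"
    by (rule measure_pmf.integrable_const_bound[where B=B]) (use h in auto)
  have "\<bar>measure_pmf.expectation (geometric_pmf p) h\<bar> \<le> measure_pmf.expectation (geometric_pmf p) (\<lambda>t. \<bar>h t\<bar>)"
    by (rule integral_abs_bound)
  also have "\<dots> \<le> measure_pmf.expectation (geometric_pmf p) (\<lambda>t. e + B * indicator {..<T} t)"
  proof (rule integral_mono)
    show "integrable (measure_pmf (geometric_pmf p)) (\<lambda>t. e + B * indicator {..<T} t)"
      by (rule measure_pmf.integrable_const_bound[where B="\<bar>e\<bar> + \<bar>B\<bar>"]) (auto simp: indicator_def)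
    fix t show "\<bar>h t\<bar> \<le> e + B * indicator {..<T} t"
      using h[of t] tail[of t] \<open>0 \<le> e\<close> by (cases "t < T") auto
  qed (use int in simp)
  also have "\<dots> = e + B * measure_pmf.prob (geometric_pmf p) {..<T}"
    by (subst Bochner_Integration.integral_add) (auto simp: measure_pmf.emeasure_eq_measure)
  also have "measure_pmf.prob (geometric_pmf p) {..<T} = (\<Sum>t<T. (1 - p) ^ t * p)"
    using p by (simp add: measure_measure_pmf_finite)
  also have "(\<Sum>t<T. (1 - p) ^ t * p) \<le> (\<Sum>t<T. p)"
    using p by (intro sum_mono) (auto intro!: mult_left_le_one_le power_le_one)
  finally show ?thesis using B by (simp add: mult_left_mono mult.assoc)
qed

lemma expectation_geometric_tendsto_zero:
  fixes s :: "nat \<Rightarrow> real"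
  assumes "s \<longlonglongrightarrow> 0" and bound: "\<And>t. \<bar>s t\<bar> \<le> B"
  shows "((\<lambda>p. measure_pmf.expectation (geometric_pmf p) s) \<longlongrightarrow> 0) (at_right 0)"
  unfolding tendsto_iff
proof safe
  fix e :: real assume e: "e > 0"
  then obtain T where T: "\<And>t. t \<ge> T \<Longrightarrow> \<bar>s t\<bar> \<le> e / 2"
    using assms(1) unfolding LIMSEQ_def dist_real_def by (metis half_gt_zero less_eq_real_def diff_zero)
  have B: "0 \<le> B" using bound[of 0] by linarith
  define d where "d = min 1 (e / (2 * (B * T + 1)))"
  have d: "0 < d" using B e by (auto simp: d_def intro!: divide_pos_pos add_nonneg_pos)
  show "\<forall>\<^sub>F p in at_right 0. dist (measure_pmf.expectation (geometric_pmf p) s) 0 < e"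
    unfolding eventually_at_right_field
  proof (intro exI[of _ d] conjI allI impI d)
    fix p :: real assume p: "0 < p" "p < d"
    have "0 < 2 * (B * T + 1)" using B by (simp add: add_nonneg_pos)
    moreover have "p < e / (2 * (B * T + 1))" using p by (simp add: d_def)
    ultimately have "(B * T + 1) * p \<le> e / 2"
      by (simp add: pos_less_divide_eq algebra_simps)
    moreover have "\<bar>measure_pmf.expectation (geometric_pmf p) s\<bar> \<le> e / 2 + B * T * p"
      using p e by (intro abs_expectation_geometric_le[OF _ _ bound T]) (auto simp: d_def)
    ultimately show "dist (measure_pmf.expectation (geometric_pmf p) s) 0 < e"
      using p e by (simp add: dist_real_def algebra_simps)
  qed
qed

lemma tendsto_supnorm_geometric_mixture:
  assumes Z: "Z \<noteq> {}" and bound: "\<And>t z. z \<in> Z \<Longrightarrow> \<bar>h t z\<bar> \<le> B"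
    and lim: "(\<lambda>t. supnorm Z (h t)) \<longlonglongrightarrow> 0" and q: "filterlim q (at_right 0) F"
  shows "((\<lambda>x. supnorm Z (\<lambda>z. measure_pmf.expectation (geometric_pmf (q x)) (\<lambda>t. h t z))) \<longlongrightarrow> 0) F"
proof (rule tendsto_supnorm_zero[OF Z])
  let ?s = "\<lambda>t. supnorm Z (h t)"
  have s: "\<bar>?s t\<bar> \<le> B" for t
  proof -
    obtain z where "z \<in> Z" using Z by blast
    have "\<bar>h t z\<bar> \<le> ?s t" by (rule abs_le_supnorm[OF bound \<open>z \<in> Z\<close>])
    moreover have "?s t \<le> B" by (rule supnorm_le[OF Z bound])
    ultimately show ?thesis by linarith
  qed
  show "((\<lambda>x. measure_pmf.expectation (geometric_pmf (q x)) ?s) \<longlongrightarrow> 0) F"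
    by (rule filterlim_compose[OF expectation_geometric_tendsto_zero[OF lim s] q])
  show "\<forall>\<^sub>F x in F. \<forall>z\<in>Z.
      \<bar>measure_pmf.expectation (geometric_pmf (q x)) (\<lambda>t. h t z)\<bar> \<le>
      measure_pmf.expectation (geometric_pmf (q x)) ?s"
  proof (intro always_eventually allI ballI)
    fix x z assume "z \<in> Z"
    have "\<bar>measure_pmf.expectation (geometric_pmf (q x)) (\<lambda>t. h t z)\<bar> \<le>
          measure_pmf.expectation (geometric_pmf (q x)) (\<lambda>t. \<bar>h t z\<bar>)"
      by (rule integral_abs_bound)
    also have "\<dots> \<le> measure_pmf.expectation (geometric_pmf (q x)) ?s"
      using bound \<open>z \<in> Z\<close> s
      by (intro integral_mono measure_pmf.integrable_const_bound[where B=B] abs_le_supnorm) auto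
    finally show "\<bar>measure_pmf.expectation (geometric_pmf (q x)) (\<lambda>t. h t z)\<bar> \<le>
        measure_pmf.expectation (geometric_pmf (q x)) ?s" .
  qed
qed

section \<open>Invariance under the resolvent\<close>

lemma sums_geometric_recursion:
  fixes a b :: "nat \<Rightarrow> real"
  assumes p: "0 < p" "p \<le> 1" and rec: "\<And>t. a t = (1 - p) * a (Suc t) + p * b t"
    and bounded: "\<And>t. \<bar>a t\<bar> \<le> B"
  shows "(\<lambda>t. (1 - p) ^ t * p * b t) sums a 0"
proof -
  have telescope: "a 0 = (\<Sum>t<T. (1 - p) ^ t * p * b t) + (1 - p) ^ T * a T" for T
  proof (induction T)
    case (Suc T)
    then show ?case using rec[of T] by (simp add: algebra_simps)
  qed simp
  have "(\<lambda>T. (1 - p) ^ T * B) \<longlonglongrightarrow> 0"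
    using p by (intro tendsto_mult_left_zero LIMSEQ_power_zero) auto
  then have "(\<lambda>T. (1 - p) ^ T * a T) \<longlonglongrightarrow> 0"
    by (rule Lim_null_comparison[rotated])
       (use p bounded in \<open>auto simp: abs_mult intro!: always_eventually mult_left_mono\<close>)
  then have "(\<lambda>T. a 0 - (1 - p) ^ T * a T) \<longlonglongrightarrow> a 0 - 0"
    by (rule tendsto_diff[OF tendsto_const])
  moreover have "(\<lambda>T. a 0 - (1 - p) ^ T * a T) = (\<lambda>T. \<Sum>t<T. (1 - p) ^ t * p * b t)"
    using telescope by (simp add: fun_eq_iff diff_eq_eq)
  ultimately show ?thesis
    unfolding sums_def by simp
qed

lemma kapply_bernoulli_mixture:
  assumes "kernel_closed Z P" "kernel_closed Z Q" "z \<in> Z" "0 \<le> p" "p \<le> 1"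
    and "\<And>w. w \<in> Z \<Longrightarrow> \<bar>g w\<bar> \<le> C"
  shows "kapply (\<lambda>z. bind_pmf (bernoulli_pmf p) (\<lambda>b. if b then Q z else P z)) g z =
         (1 - p) * kapply P g z + p * kapply Q g z"
proof -
  have "measure_pmf.expectation (bind_pmf (bernoulli_pmf p) (\<lambda>b. if b then Q z else P z)) g =
        measure_pmf.expectation (bernoulli_pmf p)
          (\<lambda>b. measure_pmf.expectation (if b then Q z else P z) g)"
    by (rule expectation_bind_pmf[where Z=Z and C=C]) (use assms in \<open>auto simp: kernel_closed_def\<close>)
  then show ?thesis using assms(4,5) by (simp add: kapply_def)
qed

lemma borel_measurable_prob_kernel:
  assumes "kernel_measurable Z K" "B \<in> sets (borel_on Z)"
  shows "(\<lambda>z. measure_pmf.prob (K z) B) \<in> borel_measurable (borel_on Z)"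
proof -
  have "(\<lambda>z. enn2real (emeasure (K z) B)) \<in> borel_measurable (borel_on Z)"
    using assms by (intro borel_measurable_enn2real) (auto simp: kernel_measurable_def)
  then show ?thesis by (simp add: measure_pmf.emeasure_eq_measure)
qed

text \<open>Averaging the invariance equation of the mixture against the \<open>t\<close>-step probabilities of \<open>B\<close>
  yields the recursion that \<open>sums_geometric_recursion\<close> solves.\<close>
lemma integral_prob_kpow_recursion:
  assumes P: "kernel_closed Z P" "kernel_measurable Z P" and Q: "kernel_closed Z Q" "kernel_measurable Z Q"
    and p: "0 \<le> p" "p \<le> 1"
    and I: "ipm Z (\<lambda>z. bind_pmf (bernoulli_pmf p) (\<lambda>b. if b then Q z else P z)) M"
    and B: "B \<in> sets (borel_on Z)"
  shows "(\<integral>z. measure_pmf.prob (kpow P t z) B \<partial>M) =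
         (1 - p) * (\<integral>z. measure_pmf.prob (kpow P (Suc t) z) B \<partial>M) +
         p * (\<integral>z. measure_pmf.prob (kcomp Q (kpow P t) z) B \<partial>M)"
proof -
  let ?Pl = "\<lambda>z. bind_pmf (bernoulli_pmf p) (\<lambda>b. if b then Q z else P z)"
  let ?h = "\<lambda>t z. measure_pmf.prob (kpow P t z) B"
  let ?q = "\<lambda>z. measure_pmf.prob (kcomp Q (kpow P t) z) B"
  have M: "M \<in> prob_measures Z" using I by (simp add: ipm_def)
  then have sM: "sets M = sets (borel_on Z)" by (simp add: prob_measures_def)
  have spM: "space M = Z" using sets_eq_imp_space_eq[OF sM] by simp
  have meq: "borel_measurable M = borel_measurable (borel_on Z)"
    by (rule measurable_cong_sets[OF sM refl])
  interpret prob_space M using M by (simp add: prob_measures_def)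
  have "kernel_closed Z (\<lambda>z. if b then Q z else P z)"
       "kernel_measurable Z (\<lambda>z. if b then Q z else P z)" for b
    using P Q by (cases b; simp)+
  then have Pl: "kernel_closed Z ?Pl" "kernel_measurable Z ?Pl"
    by (auto intro!: kernel_closed_mixture
        kernel_measurable_finite_mixture[where K="\<lambda>b z. if b then Q z else P z"])
  have hm: "?h t \<in> borel_measurable M" for t
    unfolding meq by (rule borel_measurable_prob_kernel[OF kernel_measurable_kpow[OF P] B])
  have qm: "?q \<in> borel_measurable M"
    unfolding meq by (rule borel_measurable_prob_kernel[OF _ B])
      (rule kernel_measurable_kcomp[OF Q(1,2) kernel_measurable_kpow[OF P]])
  have "(\<integral>z. ?h t z \<partial>M) = (\<integral>z. kapply ?Pl (?h t) z \<partial>M)"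
    using hm meq by (intro integral_kapply_ipm[symmetric, OF M Pl I, where C=1]) auto
  also have "\<dots> = (\<integral>z. (1 - p) * ?h (Suc t) z + p * ?q z \<partial>M)"
  proof (rule Bochner_Integration.integral_cong[OF refl])
    fix z assume "z \<in> space M"
    then have "kapply ?Pl (?h t) z = (1 - p) * kapply P (?h t) z + p * kapply Q (?h t) z"
      using spM by (intro kapply_bernoulli_mixture[OF P(1) Q(1) _ p, where C=1]) auto
    then show "kapply ?Pl (?h t) z = (1 - p) * ?h (Suc t) z + p * ?q z"
      unfolding kapply_def
      by (simp add: measure_bind_pmf[symmetric] kpow_Suc_left kcomp_def del: kpow.simps)
  qed
  also have "\<dots> = (1 - p) * (\<integral>z. ?h (Suc t) z \<partial>M) + p * (\<integral>z. ?q z \<partial>M)"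
  proof -
    have "integrable M (?h (Suc t))" "integrable M ?q"
      using hm qm by (auto intro!: integrable_const_bound[where B=1] simp del: kpow.simps)
    then show ?thesis by simp
  qed
  finally show ?thesis .
qed

lemma emeasure_kcomp_geometric_mixture:
  "emeasure (kcomp Q (\<lambda>z. bind_pmf (geometric_pmf p) (\<lambda>t. kpow P t z)) z) B =
   (\<Sum>t. ennreal (pmf (geometric_pmf p) t * measure_pmf.prob (kcomp Q (kpow P t) z) B))"
proof -
  have "kcomp Q (\<lambda>z. bind_pmf (geometric_pmf p) (\<lambda>t. kpow P t z)) z =
        bind_pmf (geometric_pmf p) (\<lambda>t. kcomp Q (kpow P t) z)"
    unfolding kcomp_def by (rule bind_commute_pmf)
  moreover have "emeasure (bind_pmf (geometric_pmf p) (\<lambda>t. kcomp Q (kpow P t) z)) B =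
    (\<Sum>t. ennreal (pmf (geometric_pmf p) t * measure_pmf.prob (kcomp Q (kpow P t) z) B))"
    by (subst emeasure_bind_pmf) (simp add: nn_integral_measure_pmf nn_integral_count_space_nat
        measure_pmf.emeasure_eq_measure ennreal_mult')
  ultimately show ?thesis by simp
qed

text \<open>The Bernoulli mixture is \<open>(1 - p) P + p Q\<close>; the conclusion concerns \<open>Q R\<close> with the
  resolvent \<open>R = \<Sum>\<^sub>t p (1 - p)\<^sup>t P\<^sup>t\<close>.\<close>
lemma ipm_kcomp_geometric_resolvent:
  assumes P: "kernel_closed Z P" "kernel_measurable Z P" and Q: "kernel_closed Z Q" "kernel_measurable Z Q"
    and p: "0 < p" "p \<le> 1"
    and I: "ipm Z (\<lambda>z. bind_pmf (bernoulli_pmf p) (\<lambda>b. if b then Q z else P z)) M"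
  shows "ipm Z (kcomp Q (\<lambda>z. bind_pmf (geometric_pmf p) (\<lambda>t. kpow P t z))) M"
  unfolding ipm_def
proof (intro conjI ballI)
  show M: "M \<in> prob_measures Z" using I by (simp add: ipm_def)
  then have sM: "sets M = sets (borel_on Z)" by (simp add: prob_measures_def)
  have meq: "borel_measurable M = borel_measurable (borel_on Z)"
    by (rule measurable_cong_sets[OF sM refl])
  interpret prob_space M using M by (simp add: prob_measures_def)
  fix B assume "B \<in> sets M"
  then have B: "B \<in> sets (borel_on Z)" using sM by simp
  define q where "q t z = measure_pmf.prob (kcomp Q (kpow P t) z) B" for t z
  define c where "c t = (1 - p) ^ t * p * (\<integral>z. q t z \<partial>M)" for t
  have qm: "q t \<in> borel_measurable M" for t
    unfolding meq q_def by (rule borel_measurable_prob_kernel[OF _ B])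
      (rule kernel_measurable_kcomp[OF Q kernel_measurable_kpow[OF P]])
  define a where "a t = (\<integral>z. measure_pmf.prob (kpow P t z) B \<partial>M)" for t
  have "a t = (1 - p) * a (Suc t) + p * (\<integral>z. q t z \<partial>M)" for t
    unfolding a_def q_def by (rule integral_prob_kpow_recursion[OF P Q _ _ I B]) (use p in auto)
  moreover have "\<bar>a t\<bar> \<le> 1" for t
  proof -
    have "(\<lambda>z. measure_pmf.prob (kpow P t z) B) \<in> borel_measurable M"
      unfolding meq by (rule borel_measurable_prob_kernel[OF kernel_measurable_kpow[OF P] B])
    then have "a t \<le> 1"
      unfolding a_def by (intro integral_le_const integrable_const_bound[where B=1]) auto
    moreover have "0 \<le> a t"
      unfolding a_def by (intro Bochner_Integration.integral_nonneg) simp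
    ultimately show ?thesis by simp
  qed
  ultimately have "c sums a 0"
    unfolding c_def by (rule sums_geometric_recursion[OF p])
  also have "a 0 = measure M B"
    using \<open>B \<in> sets M\<close> by (simp add: a_def measure_return_pmf)
  finally have c: "c sums measure M B" .
  have "(\<integral>\<^sup>+z. emeasure (kcomp Q (\<lambda>z. bind_pmf (geometric_pmf p) (\<lambda>t. kpow P t z)) z) B \<partial>M) =
        (\<Sum>t. \<integral>\<^sup>+z. ennreal (pmf (geometric_pmf p) t * q t z) \<partial>M)"
    unfolding emeasure_kcomp_geometric_mixture q_def[symmetric]
    by (rule nn_integral_suminf) (use qm in auto)
  also have "\<dots> = (\<Sum>t. ennreal (c t))"
  proof (rule suminf_cong)
    fix t
    have "integrable M (\<lambda>z. pmf (geometric_pmf p) t * q t z)"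
      using qm[of t] by (intro integrable_mult_right integrable_const_bound[where B=1])
        (auto simp: q_def[abs_def])
    then have "(\<integral>\<^sup>+z. ennreal (pmf (geometric_pmf p) t * q t z) \<partial>M) =
               ennreal (\<integral>z. pmf (geometric_pmf p) t * q t z \<partial>M)"
      by (rule nn_integral_eq_integral) (simp add: q_def)
    then show "(\<integral>\<^sup>+z. ennreal (pmf (geometric_pmf p) t * q t z) \<partial>M) = ennreal (c t)"
      using p by (simp add: c_def)
  qed
  also have "\<dots> = emeasure M B"
    using c p by (subst suminf_ennreal2)
      (auto simp: sums_iff emeasure_eq_measure c_def q_def intro!: integral_nonneg_AE)
  finally show "(\<integral>\<^sup>+z. emeasure (kcomp Q (\<lambda>z. bind_pmf (geometric_pmf p) (\<lambda>t. kpow P t z)) z) B \<partial>M) =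
      emeasure M B" .
qed

section \<open>Measures determined by bounded continuous functions\<close>

definition cutoff :: "'b::metric_space set \<Rightarrow> nat \<Rightarrow> 'b \<Rightarrow> real" where
  "cutoff U k w = min 1 (real k * infdist w (- U))"

lemma continuous_on_cutoff: "continuous_on A (cutoff U k)"
  unfolding cutoff_def by (intro continuous_intros continuous_at_imp_continuous_on ballI continuous_infdist)

lemma cutoff_bounds: "0 \<le> cutoff U k w" "cutoff U k w \<le> 1"
  by (auto simp: cutoff_def infdist_nonneg)

lemma incseq_cutoff: "incseq (\<lambda>k w. ennreal (cutoff U k w))"
  unfolding incseq_def le_fun_def cutoff_def
  by (auto intro!: ennreal_leI min.mono mult_right_mono infdist_nonneg)

lemma SUP_cutoff:
  assumes "open U" "U \<noteq> UNIV"
  shows "(SUP k. ennreal (cutoff U k w)) = indicator U w"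
proof (cases "w \<in> U")
  case True
  have d: "0 < infdist w (- U)"
    using assms True by (intro infdist_pos_not_in_closed) auto
  obtain k :: nat where "1 / infdist w (- U) \<le> k" using real_arch_simple by blast
  then have "cutoff U k w = 1" using d by (simp add: cutoff_def field_simps)
  then have "(SUP k. ennreal (cutoff U k w)) = 1"
    by (intro antisym SUP_least SUP_upper2[of k]) (auto simp: cutoff_bounds)
  then show ?thesis using True by simp
qed (simp add: cutoff_def)

text \<open>The state space is only a topological space; continuous functions separating open sets
  are borrowed from a metric space into which it embeds.\<close>
definition metric_embedding :: "('a::topological_space \<Rightarrow> 'b::metric_space) \<Rightarrow> bool" where
  "metric_embedding e \<longleftrightarrow> continuous_on UNIV e \<and> (\<forall>U. open U \<longrightarrow> (\<exists>V. open V \<and> U = e -` V))"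

lemma Cb_cutoff_comp:
  assumes "continuous_on UNIV e"
  shows "Cb Z (\<lambda>w. cutoff V k (e w))"
proof -
  have "continuous_on UNIV (\<lambda>w. cutoff V k (e w))"
    by (rule continuous_on_compose2[OF continuous_on_cutoff[of UNIV] assms subset_UNIV])
  moreover have "\<bar>cutoff V k (e w)\<bar> \<le> 1" for w
    using cutoff_bounds[of V k "e w"] by linarith
  ultimately show ?thesis
    unfolding Cb_def bounded_real by (auto intro!: exI[of _ 1] continuous_on_subset[OF _ subset_UNIV])
qed

lemma emeasure_open_eq_SUP_cutoff:
  assumes e: "continuous_on UNIV e" and L: "sets L = sets (borel_on Z)" "finite_measure L"
    and V: "open V" "V \<noteq> UNIV"
  shows "emeasure L (e -` V \<inter> Z) = (SUP k. ennreal (\<integral>w. cutoff V k (e w) \<partial>L))"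
proof -
  have spL: "space L = Z" using sets_eq_imp_space_eq[OF L(1)] by simp
  have meas: "(\<lambda>w. cutoff V k (e w)) \<in> borel_measurable L" for k
    using borel_measurable_Cb[OF Cb_cutoff_comp[OF e]] measurable_cong_sets[OF L(1) refl] by blast
  have "open (e -` V)" using V(1) e by (simp add: continuous_on_open_vimage)
  then have "e -` V \<inter> Z \<in> sets L" using L(1) by (auto simp: sets_restrict_space)
  then have "emeasure L (e -` V \<inter> Z) = (\<integral>\<^sup>+w. indicator (e -` V \<inter> Z) w \<partial>L)"
    by simp
  also have "\<dots> = (\<integral>\<^sup>+w. (SUP k. ennreal (cutoff V k (e w))) \<partial>L)"
    by (intro nn_integral_cong) (simp add: SUP_cutoff[OF V] spL indicator_def)
  also have "\<dots> = (SUP k. \<integral>\<^sup>+w. ennreal (cutoff V k (e w)) \<partial>L)"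
    using incseq_cutoff[of V] meas
    by (intro nn_integral_monotone_convergence_SUP) (auto simp: incseq_def le_fun_def)
  also have "\<dots> = (SUP k. ennreal (\<integral>w. cutoff V k (e w) \<partial>L))"
    using meas
    by (intro SUP_cong refl nn_integral_eq_integral
        finite_measure.integrable_const_bound[OF L(2), where B=1])
      (auto intro!: AE_I2 simp: abs_le_iff cutoff_bounds)
  finally show ?thesis .
qed

lemma sets_borel_on_generated: "sets (borel_on Z) = sigma_sets Z {U \<inter> Z | U. open U}"
proof -
  have "sets (borel_on Z) = sets (vimage_algebra Z (\<lambda>x. x) borel)"
    by (rule restrict_space_eq_vimage_algebra) simp
  also have "\<dots> = {(\<lambda>x. x) -` A \<inter> Z | A. A \<in> sigma_sets UNIV {S. open S}}"
    by (simp add: sets_vimage_algebra2 sets_borel)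
  also have "\<dots> = sigma_sets Z {(\<lambda>x. x) -` A \<inter> Z | A. A \<in> {S. open S}}"
    by (rule sigma_sets_vimage_commute) simp
  finally show ?thesis by simp
qed

lemma Int_stable_open_restrict: "Int_stable {U \<inter> Z | U. open U}"
  unfolding Int_stable_def
proof safe
  fix U V :: "'a set" assume "open U" "open V"
  then show "\<exists>W. U \<inter> Z \<inter> (V \<inter> Z) = W \<inter> Z \<and> open W"
    by (intro exI[of _ "U \<inter> V"]) auto
qed

lemma measure_eqI_Cb:
  fixes e :: "'a::topological_space \<Rightarrow> 'b::metric_space" and Z :: "'a set"
  assumes e: "metric_embedding e"
    and L: "sets L = sets (borel_on Z)" "finite_measure L"
    and N: "sets N = sets (borel_on Z)" "finite_measure N"
    and eq: "\<And>f. Cb Z f \<Longrightarrow> integral\<^sup>L L f = integral\<^sup>L N f"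
  shows "L = N"
proof -
  have spL: "space L = Z" and spN: "space N = Z"
    using sets_eq_imp_space_eq[OF L(1)] sets_eq_imp_space_eq[OF N(1)] by simp_all
  have "Cb Z (\<lambda>_. 1)" by (auto simp: Cb_def bounded_real)
  then have "measure L Z = measure N Z"
    using eq[of "\<lambda>_. 1"] spL spN by simp
  then have total: "emeasure L Z = emeasure N Z"
    using L(2) N(2) spL spN by (metis finite_measure.emeasure_eq_measure)
  have open_eq: "emeasure L X = emeasure N X" if "X \<in> {U \<inter> Z | U. open U}" for X
  proof -
    obtain V where V: "open V" "X = e -` V \<inter> Z"
      using \<open>X \<in> _\<close> e by (auto simp: metric_embedding_def)
    show ?thesis
    proof (cases "V = UNIV")
      case True
      then show ?thesis using V total by simp
    next
      case False
      have "\<And>k. Cb Z (\<lambda>w. cutoff V k (e w))"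
        using e by (intro Cb_cutoff_comp) (simp add: metric_embedding_def)
      then show ?thesis
        using e eq unfolding V(2) metric_embedding_def
        by (simp add: emeasure_open_eq_SUP_cutoff[OF _ L V(1) False]
            emeasure_open_eq_SUP_cutoff[OF _ N V(1) False])
    qed
  qed
  show ?thesis
  proof (rule measure_eqI_generator_eq[OF Int_stable_open_restrict _ open_eq, where A="\<lambda>_. Z"])
    show "sets L = sigma_sets Z {U \<inter> Z | U. open U}" "sets N = sigma_sets Z {U \<inter> Z | U. open U}"
      using L(1) N(1) sets_borel_on_generated by simp_all
    show "emeasure L Z \<noteq> \<infinity>" for i :: nat
      using finite_measure.emeasure_finite[OF L(2), of Z] spL by simp
  qed auto
qed

lemma kernel_measurable_if_feller:
  fixes e :: "'a::topological_space \<Rightarrow> 'b::metric_space" and Z :: "'a set"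
  assumes e: "metric_embedding e" and K: "kernel_closed Z K" "feller Z K"
  shows "kernel_measurable Z K"
proof -
  have e_cont: "continuous_on UNIV e" using e by (simp add: metric_embedding_def)
  have prob: "prob_space (kernel_measure Z K a)" if "a \<in> Z" for a
    using K(1) that by (auto simp: kernel_closed_def intro!: prob_space_kernel_measure)
  have total: "(\<lambda>a. emeasure (kernel_measure Z K a) Z) \<in> borel_measurable (borel_on Z)"
  proof (rule measurable_cong[THEN iffD2])
    show "emeasure (kernel_measure Z K a) Z = 1" if "a \<in> space (borel_on Z)" for a
      using prob_space.emeasure_space_1[OF prob] that by simp
  qed simp
  have "kernel_measure Z K \<in> borel_on Z \<rightarrow>\<^sub>M subprob_algebra (borel_on Z)"
  proof (rule measurable_subprob_algebra_generated[OF sets_borel_on_generated Int_stable_open_restrict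
        _ _ _ _ total])
    fix A assume "A \<in> {U \<inter> Z | U. open U}"
    then obtain V where V: "open V" "A = e -` V \<inter> Z"
      using e by (auto simp: metric_embedding_def)
    show "(\<lambda>a. emeasure (kernel_measure Z K a) A) \<in> borel_measurable (borel_on Z)"
    proof (cases "V = UNIV")
      case True
      then show ?thesis using V total by simp
    next
      case False
      have "(\<lambda>a. SUP k. ennreal (kapply K (\<lambda>w. cutoff V k (e w)) a)) \<in> borel_measurable (borel_on Z)"
        using borel_measurable_Cb[OF Cb_kapply[OF K(1,2) Cb_cutoff_comp[OF e_cont]]] by measurable
      moreover have "emeasure (kernel_measure Z K a) A = (SUP k. ennreal (kapply K (\<lambda>w. cutoff V k (e w)) a))"
        if "a \<in> Z" for a
        using prob[OF that] unfolding V(2)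
        by (subst emeasure_open_eq_SUP_cutoff[OF e_cont _ _ V(1) False])
          (auto simp: integral_kernel_measure borel_measurable_Cb[OF Cb_cutoff_comp[OF e_cont]]
            prob_space.finite_measure K(1)[unfolded kernel_closed_def] that)
      ultimately show ?thesis
        by (subst measurable_cong[where g="\<lambda>a. SUP k. ennreal (kapply K (\<lambda>w. cutoff V k (e w)) a)"]) auto
    qed
  qed (use prob in \<open>auto intro: prob_space_imp_subprob_space\<close>)
  then show ?thesis
    unfolding kernel_measurable_def
    by (auto dest: measurable_emeasure_kernel simp: emeasure_kernel_measure)
qed

lemma ipm_if_integral_kapply_eq:
  fixes e :: "'a::topological_space \<Rightarrow> 'b::metric_space" and Z :: "'a set"
  assumes e: "metric_embedding e" and \<nu>: "\<nu> \<in> prob_measures Z"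
    and K: "kernel_closed Z K" "kernel_measurable Z K"
    and eq: "\<And>f. Cb Z f \<Longrightarrow> (\<integral>z. kapply K f z \<partial>\<nu>) = integral\<^sup>L \<nu> f"
  shows "ipm Z K \<nu>"
proof -
  have s\<nu>: "sets \<nu> = sets (borel_on Z)" and p\<nu>: "prob_space \<nu>"
    using \<nu> by (auto simp: prob_measures_def)
  have km: "kernel_measure Z K \<in> \<nu> \<rightarrow>\<^sub>M subprob_algebra (borel_on Z)"
    using measurable_cong_sets[OF s\<nu> refl] measurable_kernel_measure[OF K] by blast
  let ?N = "bind \<nu> (kernel_measure Z K)"
  have "?N = \<nu>"
  proof (rule measure_eqI_Cb[OF e _ _ s\<nu>])
    show "sets ?N = sets (borel_on Z)"
      using prob_space.not_empty[OF p\<nu>] by (subst sets_bind) auto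
    show "finite_measure ?N"
      using subprob_space_bind[OF prob_space_imp_subprob_space[OF p\<nu>] km]
      by (simp add: subprob_space_def)
    show "finite_measure \<nu>" using p\<nu> by (rule prob_space.axioms(1))
    fix f assume f: "Cb Z f"
    obtain C where "\<forall>z\<in>Z. \<bar>f z\<bar> \<le> C" using Cb_bounded[OF f] by blast
    then show "integral\<^sup>L ?N f = integral\<^sup>L \<nu> f"
      using integral_bind_kernel_measure[OF \<nu> K borel_measurable_Cb[OF f], of C] eq[OF f] by simp
  qed
  then show ?thesis using ipm_iff_bind_kernel_measure[OF \<nu> K] by simp
qed

lemma abs_integral_diff_le_supnorm:
  fixes g h :: "'a::topological_space \<Rightarrow> real"
  assumes M: "M \<in> prob_measures Z"
    and meas: "g \<in> borel_measurable (borel_on Z)" "h \<in> borel_measurable (borel_on Z)"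
    and bounded: "\<And>z. z \<in> Z \<Longrightarrow> \<bar>g z\<bar> \<le> C" "\<And>z. z \<in> Z \<Longrightarrow> \<bar>h z\<bar> \<le> C"
  shows "\<bar>integral\<^sup>L M g - integral\<^sup>L M h\<bar> \<le> supnorm Z (\<lambda>z. g z - h z)"
proof -
  have sM: "sets M = sets (borel_on Z)" using M by (simp add: prob_measures_def)
  interpret prob_space M using M by (simp add: prob_measures_def)
  have spM: "space M = Z" using sets_eq_imp_space_eq[OF sM] by simp
  have int: "integrable M g" "integrable M h"
    using meas bounded measurable_cong_sets[OF sM refl] spM
    by (auto intro!: integrable_const_bound[where B=C])
  have diff: "\<bar>g z - h z\<bar> \<le> 2 * C" if "z \<in> Z" for z
    using bounded[OF that] by linarith
  then have le_sup: "\<bar>g z - h z\<bar> \<le> supnorm Z (\<lambda>z. g z - h z)" if "z \<in> Z" for z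
    by (rule abs_le_supnorm[OF _ that])
  have "\<bar>integral\<^sup>L M g - integral\<^sup>L M h\<bar> = \<bar>\<integral>z. g z - h z \<partial>M\<bar>"
    using int by simp
  also have "\<dots> \<le> (\<integral>z. \<bar>g z - h z\<bar> \<partial>M)"
    by (rule integral_abs_bound)
  also have "\<dots> \<le> supnorm Z (\<lambda>z. g z - h z)"
    using int spM le_sup by (intro integral_le_const AE_I2) auto
  finally show ?thesis .
qed

text \<open>Passing to the limit in \<open>\<integral> f d\<mu>\<^sub>k = \<integral> K\<^sub>k f d\<mu>\<^sub>k\<close>: the kernels converge uniformly on \<open>C\<^sub>b\<close>
  and \<open>K f\<close> is again in \<open>C\<^sub>b\<close>, so weak convergence applies to both sides.\<close>
lemma integral_kapply_eq_if_limit: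
  assumes Ks: "\<And>k. kernel_closed Z (Ks k)" "\<And>k. kernel_measurable Z (Ks k)"
    and K: "kernel_closed Z K" "kernel_measurable Z K" "feller Z K"
    and unif: "\<And>f. Cb Z f \<Longrightarrow> (\<lambda>k. supnorm Z (\<lambda>z. kapply (Ks k) f z - kapply K f z)) \<longlonglongrightarrow> 0"
    and Ms: "\<And>k. ipm Z (Ks k) (Ms k)" and wc: "weak_conv_Cb Z Ms \<nu>"
    and f: "Cb Z f"
  shows "(\<integral>z. kapply K f z \<partial>\<nu>) = integral\<^sup>L \<nu> f"
proof -
  obtain C where C: "\<And>z. z \<in> Z \<Longrightarrow> \<bar>f z\<bar> \<le> C" using Cb_bounded[OF f] by blast
  have fm: "f \<in> borel_measurable (borel_on Z)" by (rule borel_measurable_Cb[OF f])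
  have Mk: "Ms k \<in> prob_measures Z" for k using Ms by (simp add: ipm_def)
  have "(\<lambda>k. integral\<^sup>L (Ms k) f - (\<integral>z. kapply K f z \<partial>Ms k)) \<longlonglongrightarrow>
        integral\<^sup>L \<nu> f - (\<integral>z. kapply K f z \<partial>\<nu>)"
    using wc f Cb_kapply[OF K(1,3) f] by (intro tendsto_diff) (auto simp: weak_conv_Cb_def)
  moreover have "(\<lambda>k. integral\<^sup>L (Ms k) f - (\<integral>z. kapply K f z \<partial>Ms k)) \<longlonglongrightarrow> 0"
  proof (rule Lim_null_comparison[OF always_eventually unif[OF f]], intro allI)
    fix k
    have "integral\<^sup>L (Ms k) f = (\<integral>z. kapply (Ks k) f z \<partial>Ms k)"
      by (rule integral_kapply_ipm[OF Mk Ks Ms fm C, symmetric])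
    also have "\<bar>\<dots> - (\<integral>z. kapply K f z \<partial>Ms k)\<bar> \<le> supnorm Z (\<lambda>z. kapply (Ks k) f z - kapply K f z)"
      using C by (intro abs_integral_diff_le_supnorm[OF Mk] borel_measurable_kapply[OF Ks fm]
          borel_measurable_kapply[OF K(1,2) fm] abs_kapply_le[OF Ks(1)] abs_kapply_le[OF K(1)])
    finally show "norm (integral\<^sup>L (Ms k) f - (\<integral>z. kapply K f z \<partial>Ms k)) \<le>
        supnorm Z (\<lambda>z. kapply (Ks k) f z - kapply K f z)" by simp
  qed
  ultimately show ?thesis using LIMSEQ_unique by fastforce
qed

section \<open>Perturbed learning automata\<close>

lemma continuous_on_nat_round_of_nat: "continuous_on (range real) (\<lambda>x::real. nat (round x))"
  unfolding continuous_on_topological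
proof (intro ballI allI impI)
  fix x B assume x: "x \<in> range real" and "open B" "nat (round x) \<in> B"
  show "\<exists>A. open A \<and> x \<in> A \<and> (\<forall>y\<in>range real. y \<in> A \<longrightarrow> nat (round y) \<in> B)"
  proof (intro exI[of _ "ball x (1/2)"] conjI ballI impI)
    fix y assume "y \<in> range real" "y \<in> ball x (1/2)"
    then obtain j k where jk: "x = real k" "y = real j" "\<bar>real j - real k\<bar> < 1/2"
      using x by (auto simp: dist_real_def abs_minus_commute)
    then have "j = k" by linarith
    with jk show "nat (round y) \<in> B" using \<open>nat (round x) \<in> B\<close> by simp
  qed auto
qed

text \<open>Reading the actions as reals embeds the state type into a metric space; rounding inverts this.\<close>
lemma metric_embedding_real_actions: "metric_embedding (\<lambda>z::state. ((\<lambda>i. real (fst z i)), snd z))"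
  unfolding metric_embedding_def
proof (intro conjI allI impI)
  let ?e = "\<lambda>z::state. ((\<lambda>i. real (fst z i)), snd z)"
  let ?r = "\<lambda>w::(nat \<Rightarrow> real) \<times> (nat \<Rightarrow> nat \<Rightarrow> real). ((\<lambda>i. nat (round (fst w i))), snd w)"
  have "continuous_on UNIV (\<lambda>z::state. \<lambda>i. real (fst z i))"
  proof (rule continuous_on_coordinatewise_then_product)
    fix i
    have c1: "continuous_on UNIV (\<lambda>z::state. fst z i)"
      by (rule continuous_on_product_then_coordinatewise[OF continuous_on_fst[OF continuous_on_id]])
    have c2: "continuous_on UNIV (\<lambda>x::nat. real x)" by (simp add: continuous_on_discrete)
    show "continuous_on UNIV (\<lambda>z::state. real (fst z i))"
      by (rule continuous_on_compose2[OF c2 c1]) auto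
  qed
  then show "continuous_on UNIV ?e"
    by (rule continuous_on_Pair) (rule continuous_on_snd[OF continuous_on_id])
  have "continuous_on (range ?e) (\<lambda>w. \<lambda>i. nat (round (fst w i)))"
  proof (rule continuous_on_coordinatewise_then_product)
    fix i
    have "continuous_on (range ?e) (\<lambda>w. fst w i)"
      by (rule continuous_on_product_then_coordinatewise[OF continuous_on_fst[OF continuous_on_id]])
    then show "continuous_on (range ?e) (\<lambda>w. nat (round (fst w i)))"
      by (rule continuous_on_compose2[OF continuous_on_nat_round_of_nat]) auto
  qed
  then have r: "continuous_on (range ?e) ?r"
    by (rule continuous_on_Pair) (rule continuous_on_snd[OF continuous_on_id])
  fix U :: "state set" assume "open U"
  then obtain A where A: "open A" "A \<inter> range ?e = ?r -` U \<inter> range ?e"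
    using r unfolding continuous_on_open_invariant by blast
  have "?e -` A = U"
  proof (intro equalityI subsetI)
    fix z assume "z \<in> ?e -` A"
    then have "?e z \<in> ?r -` U \<inter> range ?e" using A(2) by blast
    then show "z \<in> U" by simp
  next
    fix z assume "z \<in> U"
    then have "?e z \<in> ?r -` U \<inter> range ?e" by simp
    then show "z \<in> ?e -` A" using A(2) by blast
  qed
  then show "\<exists>V. open V \<and> U = ?e -` V" using A(1) by blast
qed

lemma pmf_strat_pmf:
  assumes "v \<in> strat_simplex k"
  shows "pmf (strat_pmf k v) j = (if j < k then v j else 0)"
proof -
  have "(\<integral>\<^sup>+j. ennreal (if j < k then v j else 0) \<partial>count_space UNIV) = (\<Sum>j<k. ennreal (v j))"
    by (subst nn_integral_count_space'[where A="{..<k}"]) auto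
  also have "\<dots> = 1"
    using assms by (subst sum_ennreal) (auto simp: strat_simplex_def)
  finally show ?thesis
    using assms unfolding strat_pmf_def by (subst pmf_embed_pmf) (auto simp: strat_simplex_def)
qed

lemma set_pmf_strat_pmf: "v \<in> strat_simplex k \<Longrightarrow> set_pmf (strat_pmf k v) \<subseteq> {..<k}"
  by (auto simp: set_pmf_iff pmf_strat_pmf split: if_splits)

locale learning_automata =
  fixes n :: nat and m :: "nat \<Rightarrow> nat" and u :: "nat \<Rightarrow> (nat \<Rightarrow> nat) \<Rightarrow> real" and eps :: real
  assumes n_pos: "n \<ge> 1" and acts: "\<forall>i<n. m i \<ge> 1"
    and upos: "\<forall>i<n. \<forall>a\<in>profiles n m. u i a > 0"
    and eps_pos: "eps > 0" and eps_small: "\<forall>i<n. \<forall>a\<in>profiles n m. eps * u i a < 1"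
begin

lemma states_nonempty: "states n m \<noteq> {}"
proof -
  have "(\<lambda>i\<in>{..<n}. 0) \<in> profiles n m" "(\<lambda>i\<in>{..<n}. unitvec 0) \<in> strategies n m"
    using acts by (auto simp: profiles_def strategies_def strat_simplex_def unitvec_def)
  then show ?thesis by (auto simp: states_def)
qed

text \<open>The update is the convex combination \<open>(1 - c) x\<^sub>i + c e\<^sub>a\<^sub>i\<close> with \<open>c = \<epsilon> u\<^sub>i(a) \<in> (0, 1)\<close>.\<close>
lemma update_in_strategies:
  assumes x: "x \<in> strategies n m" and a: "a \<in> profiles n m"
  shows "update n u eps x a \<in> strategies n m"
  unfolding strategies_def
proof (rule PiE_I)
  fix i assume i: "i \<in> {..<n}"
  define c where "c = eps * u i a"
  have c: "0 < c" "c < 1" using upos eps_small eps_pos i a by (auto simp: c_def)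
  have xi: "x i \<in> strat_simplex (m i)" using x i by (auto simp: strategies_def)
  have ai: "a i < m i" using a i by (auto simp: profiles_def)
  have eq: "update n u eps x a i = (\<lambda>k. (1 - c) * x i k + c * unitvec (a i) k)"
    using i by (auto simp: update_def c_def algebra_simps fun_eq_iff)
  have "(\<Sum>k<m i. (1 - c) * x i k + c * unitvec (a i) k) = 1"
    using xi ai by (simp add: sum.distrib sum_distrib_left[symmetric] strat_simplex_def unitvec_def)
  then show "update n u eps x a i \<in> strat_simplex (m i)"
    unfolding eq strat_simplex_def
    using xi c ai by (auto simp: strat_simplex_def unitvec_def intro!: add_nonneg_nonneg)
qed (simp add: update_def)

definition action_pmf :: "nat set \<Rightarrow> (nat \<Rightarrow> nat \<Rightarrow> real) \<Rightarrow> nat \<Rightarrow> nat pmf" where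
  "action_pmf S x i = (if i \<in> S then pmf_of_set {..<m i} else strat_pmf (m i) (x i))"

definition profile_weight :: "nat set \<Rightarrow> (nat \<Rightarrow> nat \<Rightarrow> real) \<Rightarrow> (nat \<Rightarrow> nat) \<Rightarrow> real" where
  "profile_weight S x a = (\<Prod>i<n. if i \<in> S then 1 / real (m i) else x i (a i))"

lemma step_eq_action_pmf:
  "step n m u eps S z =
     map_pmf (\<lambda>a. (a, update n u eps (snd z) a)) (Pi_pmf {..<n} undefined (action_pmf S (snd z)))"
  unfolding step_def action_pmf_def by simp

lemma set_pmf_Pi_action_pmf:
  assumes "x \<in> strategies n m"
  shows "set_pmf (Pi_pmf {..<n} undefined (action_pmf S x)) \<subseteq> profiles n m"
proof -
  have "set_pmf (action_pmf S x i) \<subseteq> {..<m i}" if "i < n" for i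
    using acts assms that set_pmf_strat_pmf[of "x i" "m i"]
    by (auto simp: action_pmf_def strategies_def set_pmf_of_set lessThan_empty_iff)
  then show ?thesis
    using set_Pi_pmf_subset'[of "{..<n}" undefined "action_pmf S x"]
    by (fastforce simp: profiles_def PiE_dflt_def PiE_def extensional_def)
qed

lemma pmf_Pi_action_pmf:
  assumes x: "x \<in> strategies n m" and a: "a \<in> profiles n m"
  shows "pmf (Pi_pmf {..<n} undefined (action_pmf S x)) a = profile_weight S x a"
proof -
  have "pmf (Pi_pmf {..<n} undefined (action_pmf S x)) a = (\<Prod>i<n. pmf (action_pmf S x i) (a i))"
    using a by (intro pmf_Pi') (auto simp: profiles_def PiE_def extensional_def)
  also have "\<dots> = profile_weight S x a"
    unfolding profile_weight_def
  proof (intro prod.cong refl)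
    fix i assume i: "i \<in> {..<n}"
    have "a i < m i" "x i \<in> strat_simplex (m i)"
      using a x i by (auto simp: profiles_def strategies_def)
    then show "pmf (action_pmf S x i) (a i) = (if i \<in> S then 1 / real (m i) else x i (a i))"
      by (auto simp: action_pmf_def pmf_of_set pmf_strat_pmf lessThan_empty_iff)
  qed
  finally show ?thesis .
qed

lemma kernel_closed_step: "kernel_closed (states n m) (step n m u eps S)"
  unfolding kernel_closed_def
proof safe
  fix z w assume z: "z \<in> states n m" and w: "w \<in> set_pmf (step n m u eps S z)"
  have x: "snd z \<in> strategies n m" using z by (auto simp: states_def)
  then show "w \<in> states n m"
    using w set_pmf_Pi_action_pmf[OF x] update_in_strategies[OF x]
    by (auto simp: step_eq_action_pmf states_def)
qed

lemma nn_integral_step: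
  assumes z: "z \<in> states n m"
  shows "(\<integral>\<^sup>+w. g w \<partial>step n m u eps S z) =
         (\<Sum>a\<in>profiles n m. ennreal (profile_weight S (snd z) a) * g (a, update n u eps (snd z) a))"
proof -
  have x: "snd z \<in> strategies n m" using z by (auto simp: states_def)
  have fin: "finite (profiles n m)" by (simp add: profiles_def finite_PiE)
  have "(\<integral>\<^sup>+w. g w \<partial>step n m u eps S z) =
        (\<integral>\<^sup>+a. g (a, update n u eps (snd z) a) \<partial>Pi_pmf {..<n} undefined (action_pmf S (snd z)))"
    by (simp add: step_eq_action_pmf)
  also have "\<dots> = (\<Sum>a\<in>profiles n m. g (a, update n u eps (snd z) a) *
                     ennreal (pmf (Pi_pmf {..<n} undefined (action_pmf S (snd z))) a))"
    by (rule nn_integral_measure_pmf_support[OF fin]) (use set_pmf_Pi_action_pmf[OF x] in auto)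
  finally show ?thesis by (simp add: pmf_Pi_action_pmf[OF x] mult.commute)
qed

lemma kapply_step:
  fixes g :: "state \<Rightarrow> real"
  assumes z: "z \<in> states n m"
  shows "kapply (step n m u eps S) g z =
         (\<Sum>a\<in>profiles n m. profile_weight S (snd z) a * g (a, update n u eps (snd z) a))"
proof -
  have x: "snd z \<in> strategies n m" using z by (auto simp: states_def)
  have fin: "finite (profiles n m)" by (simp add: profiles_def finite_PiE)
  have "kapply (step n m u eps S) g z =
        measure_pmf.expectation (Pi_pmf {..<n} undefined (action_pmf S (snd z)))
          (\<lambda>a. g (a, update n u eps (snd z) a))"
    by (simp add: kapply_def step_eq_action_pmf)
  also have "\<dots> = (\<Sum>a\<in>profiles n m. pmf (Pi_pmf {..<n} undefined (action_pmf S (snd z))) a *\<^sub>R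
                     g (a, update n u eps (snd z) a))"
    by (rule integral_measure_pmf[OF fin]) (use set_pmf_Pi_action_pmf[OF x] in auto)
  finally show ?thesis by (simp add: pmf_Pi_action_pmf[OF x])
qed

lemma continuous_on_strategy_entry: "continuous_on UNIV (\<lambda>z::state. snd z i k)"
  by (rule continuous_on_product_then_coordinatewise,
      rule continuous_on_product_then_coordinatewise, rule continuous_on_snd[OF continuous_on_id])

lemma continuous_on_profile_weight: "continuous_on UNIV (\<lambda>z::state. profile_weight S (snd z) a)"
  unfolding profile_weight_def
proof (intro continuous_on_prod)
  fix i
  show "continuous_on UNIV (\<lambda>z::state. if i \<in> S then 1 / real (m i) else snd z i (a i))"
    using continuous_on_strategy_entry by (cases "i \<in> S") auto
qed

lemma continuous_on_update: "continuous_on UNIV (\<lambda>z::state. (a, update n u eps (snd z) a))"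
proof -
  have "continuous_on UNIV (\<lambda>z::state. update n u eps (snd z) a i)" for i
  proof (cases "i < n")
    case True
    have "continuous_on UNIV (\<lambda>z::state. \<lambda>k. snd z i k + eps * u i a * (unitvec (a i) k - snd z i k))"
      by (intro continuous_on_coordinatewise_then_product continuous_on_add continuous_on_mult
          continuous_on_diff continuous_on_const continuous_on_strategy_entry)
    then show ?thesis using True by (simp add: update_def)
  qed (simp add: update_def)
  then have "continuous_on UNIV (\<lambda>z::state. update n u eps (snd z) a)"
    by (rule continuous_on_coordinatewise_then_product)
  then show ?thesis by (rule continuous_on_Pair[OF continuous_on_const])
qed

lemma update_in_states: "a \<in> profiles n m \<Longrightarrow> z \<in> states n m \<Longrightarrow> (a, update n u eps (snd z) a) \<in> states n m"
  using update_in_strategies by (auto simp: states_def)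

lemma feller_step: "feller (states n m) (step n m u eps S)"
  unfolding feller_def
proof safe
  fix f assume f: "Cb (states n m) f"
  have "continuous_on (states n m)
      (\<lambda>z. \<Sum>a\<in>profiles n m. profile_weight S (snd z) a * f (a, update n u eps (snd z) a))"
  proof (intro continuous_on_sum continuous_on_mult continuous_on_subset[OF continuous_on_profile_weight subset_UNIV])
    fix a assume "a \<in> profiles n m"
    show "continuous_on (states n m) (\<lambda>z. f (a, update n u eps (snd z) a))"
    proof (rule continuous_on_compose2[of "states n m" f, OF _ continuous_on_subset[OF continuous_on_update subset_UNIV]])
      show "continuous_on (states n m) f" using f by (simp add: Cb_def)
    qed (use \<open>a \<in> profiles n m\<close> update_in_states in auto)
  qed
  then show "continuous_on (states n m) (kapply (step n m u eps S) f)"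
    by (rule continuous_on_cong[THEN iffD1, rotated 2]) (auto simp: kapply_step)
qed

lemma kernel_measurable_step: "kernel_measurable (states n m) (step n m u eps S)"
  unfolding kernel_measurable_def
proof safe
  fix B assume B: "B \<in> sets (borel_on (states n m))"
  have "(\<lambda>z. \<Sum>a\<in>profiles n m. ennreal (profile_weight S (snd z) a) *
          indicator B (a, update n u eps (snd z) a)) \<in> borel_measurable (borel_on (states n m))"
  proof (intro borel_measurable_sum borel_measurable_times_ennreal)
    fix a assume a: "a \<in> profiles n m"
    have "(\<lambda>z. profile_weight S (snd z) a) \<in> borel_measurable (borel_on (states n m))"
      using continuous_on_profile_weight continuous_on_subset borel_measurable_continuous_on_restrict
      by blast
    then show "(\<lambda>z. ennreal (profile_weight S (snd z) a)) \<in> borel_measurable (borel_on (states n m))"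
      by simp
    have m1: "(\<lambda>z::state. (a, update n u eps (snd z) a)) \<in> borel_on (states n m) \<rightarrow>\<^sub>M borel_on (states n m)"
    proof (rule measurable_restrict_space2)
      show "(\<lambda>z. (a, update n u eps (snd z) a)) \<in> space (borel_on (states n m)) \<rightarrow> states n m"
        using a update_in_states by auto
      show "(\<lambda>z::state. (a, update n u eps (snd z) a)) \<in> borel_on (states n m) \<rightarrow>\<^sub>M borel"
        using continuous_on_update continuous_on_subset borel_measurable_continuous_on_restrict by blast
    qed
    have m2: "indicator B \<in> borel_measurable (borel_on (states n m))" using B by simp
    show "(\<lambda>z. indicator B (a, update n u eps (snd z) a) :: ennreal)
        \<in> borel_measurable (borel_on (states n m))"
      using measurable_compose[OF m1 m2] by simp
  qed
  then show "(\<lambda>z. emeasure (step n m u eps S z) B) \<in> borel_measurable (borel_on (states n m))"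
    by (rule measurable_cong[THEN iffD1, rotated])
       (auto simp: nn_integral_step nn_integral_indicator[symmetric] simp del: nn_integral_indicator)
qed


lemma Plam_eq_bind_tremble: "Plam n m u eps l z = bind_pmf (tremble_pmf n l) (\<lambda>S. step n m u eps S z)"
proof -
  let ?F = "\<lambda>a. (a, update n u eps (snd z) a)"
  let ?G = "\<lambda>i b. if b then pmf_of_set {..<m i} else strat_pmf (m i) (snd z i)"
  have "Plam n m u eps l z = map_pmf ?F (Pi_pmf {..<n} undefined (\<lambda>i. bind_pmf (bernoulli_pmf l) (?G i)))"
    by (simp add: Plam_def)
  also have "Pi_pmf {..<n} undefined (\<lambda>i. bind_pmf (bernoulli_pmf l) (?G i)) =
     bind_pmf (Pi_pmf {..<n} False (\<lambda>_. bernoulli_pmf l)) (\<lambda>b. Pi_pmf {..<n} undefined (\<lambda>i. ?G i (b i)))"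
    by (rule Pi_pmf_bind) simp
  also have "map_pmf ?F \<dots> =
      bind_pmf (Pi_pmf {..<n} False (\<lambda>_. bernoulli_pmf l)) (\<lambda>b. step n m u eps {i \<in> {..<n}. b i} z)"
    unfolding map_bind_pmf step_def
    by (intro bind_pmf_cong refl arg_cong[where f="map_pmf ?F"] Pi_pmf_cong) auto
  finally show ?thesis by (simp add: tremble_pmf_def bind_map_pmf)
qed

lemma Plam_0: "Plam n m u eps 0 = step n m u eps {}"
  by (simp add: fun_eq_iff Plam_eq_bind_tremble tremble_pmf_def bernoulli_pmf_0
      Pi_pmf_return_pmf bind_return_pmf)

lemma set_pmf_tremble_pmf: "set_pmf (tremble_pmf n l) \<subseteq> Pow {..<n}"
  by (auto simp: tremble_pmf_def)

lemma pmf_tremble_pmf: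
  assumes l: "0 \<le> l" "l \<le> 1" and S: "S \<subseteq> {..<n}"
  shows "pmf (tremble_pmf n l) S = l ^ card S * (1 - l) ^ (n - card S)"
proof -
  define M where "M = Pi_pmf {..<n} False (\<lambda>_. bernoulli_pmf l)"
  define f where "f = (\<lambda>b::nat \<Rightarrow> bool. {i \<in> {..<n}. b i})"
  define bS where "bS = (\<lambda>i. i \<in> S)"
  have "set_pmf M \<subseteq> {b. \<forall>x. x \<notin> {..<n} \<longrightarrow> b x = False}"
    unfolding M_def by (rule set_Pi_pmf_subset) simp
  then have eq: "f -` {S} \<inter> set_pmf M = {bS} \<inter> set_pmf M"
    using S by (auto simp: f_def bS_def fun_eq_iff)
  have "pmf (tremble_pmf n l) S = measure_pmf.prob M (f -` {S})"
    by (simp add: tremble_pmf_def pmf_map M_def f_def)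
  also have "\<dots> = pmf M bS"
    by (metis eq measure_Int_set_pmf measure_pmf_single)
  also have "\<dots> = (\<Prod>i<n. if i \<in> S then l else 1 - l)"
    unfolding M_def using S l by (subst pmf_Pi') (auto simp: bS_def intro!: prod.cong)
  also have "\<dots> = l ^ card S * (1 - l) ^ (n - card S)"
  proof -
    have "{..<n} \<inter> - S = {..<n} - S" by auto
    then have "card ({..<n} \<inter> - S) = n - card S"
      using card_Diff_subset[OF finite_subset[OF S] S] by simp
    then show ?thesis using S by (subst prod.If_cases) (simp_all add: Int_absorb1)
  qed
  finally show ?thesis .
qed

lemma phi_pos: "0 < l \<Longrightarrow> l \<le> 1 \<Longrightarrow> 0 < phi n l"
  using n_pos by (simp add: phi_def power_less_one_iff)

lemma phi_le_1: "0 \<le> l \<Longrightarrow> l \<le> 1 \<Longrightarrow> phi n l \<le> 1"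
  by (simp add: phi_def)

lemma phi_le: "0 \<le> l \<Longrightarrow> l \<le> 1 \<Longrightarrow> phi n l \<le> real n * l"
  using Bernoulli_inequality[of "- l" n] by (simp add: phi_def)

lemma filterlim_phi: "filterlim (phi n) (at_right 0) (at_right 0)"
proof (rule filterlim_at_withinI)
  have "continuous (at_right 0) (phi n)"
    unfolding phi_def by (intro continuous_intros)
  then show "(phi n \<longlongrightarrow> 0) (at_right 0)"
    by (simp add: continuous_within phi_def)
  show "\<forall>\<^sub>F l in at_right 0. phi n l \<in> {0<..} - {0}"
    unfolding eventually_at_right_field using phi_pos by (auto intro!: exI[of _ 1])
qed

lemma tremble_nonempty_possible:
  assumes "0 < l" "l \<le> 1"
  shows "set_pmf (tremble_pmf n l) \<inter> {S. S \<noteq> {}} \<noteq> {}"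
proof -
  have "pmf (tremble_pmf n l) {..<n} = l ^ n" using pmf_tremble_pmf[of l "{..<n}"] assms by simp
  then have "{..<n} \<in> set_pmf (tremble_pmf n l)" using assms by (simp add: set_pmf_iff)
  moreover have "{..<n} \<noteq> {}" using n_pos by (auto simp: lessThan_empty_iff)
  ultimately show ?thesis by blast
qed

lemma pmf_cond_tremble:
  assumes "0 < l" "l \<le> 1"
  shows "pmf (cond_pmf (tremble_pmf n l) {S. S \<noteq> {}}) S =
         (if S \<noteq> {} then pmf (tremble_pmf n l) S / phi n l else 0)"
proof -
  have "measure_pmf.prob (tremble_pmf n l) {S. S \<noteq> {}} =
        measure_pmf.prob (tremble_pmf n l) (space (measure_pmf (tremble_pmf n l)) - {{}})"
    by (intro arg_cong[where f="measure_pmf.prob (tremble_pmf n l)"]) auto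
  also have "\<dots> = 1 - pmf (tremble_pmf n l) {}"
    by (subst measure_pmf.prob_compl) (simp_all add: measure_pmf_single)
  also have "\<dots> = phi n l" using assms pmf_tremble_pmf[of l "{}"] by (simp add: phi_def)
  finally show ?thesis using pmf_cond[OF tremble_nonempty_possible[OF assms]] by simp
qed

lemma Plam_eq_mixture:
  assumes "0 < l" "l \<le> 1"
  shows "Plam n m u eps l z =
         bind_pmf (bernoulli_pmf (phi n l)) (\<lambda>b. if b then Qlam n m u eps l z else Plam n m u eps 0 z)"
proof -
  have "tremble_pmf n l =
        bind_pmf (bernoulli_pmf (phi n l)) (\<lambda>b. if b then cond_pmf (tremble_pmf n l) {S. S \<noteq> {}} else return_pmf {})"
  proof (rule pmf_eqI)
    fix S
    show "pmf (tremble_pmf n l) S = pmf (bind_pmf (bernoulli_pmf (phi n l))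
        (\<lambda>b. if b then cond_pmf (tremble_pmf n l) {S. S \<noteq> {}} else return_pmf {})) S"
      using assms phi_pos[OF assms] phi_le_1[of l] pmf_tremble_pmf[of l "{}"]
      by (simp add: pmf_bind pmf_cond_tremble phi_def)
  qed
  then have "Plam n m u eps l z = bind_pmf (bernoulli_pmf (phi n l))
      (\<lambda>b. bind_pmf (if b then cond_pmf (tremble_pmf n l) {S. S \<noteq> {}} else return_pmf {})
        (\<lambda>S. step n m u eps S z))"
    unfolding Plam_eq_bind_tremble by (subst \<open>tremble_pmf n l = _\<close>) (rule bind_assoc_pmf)
  also have "\<dots> = bind_pmf (bernoulli_pmf (phi n l))
      (\<lambda>b. if b then Qlam n m u eps l z else Plam n m u eps 0 z)"
    by (intro bind_pmf_cong refl) (simp add: Qlam_def Plam_0 bind_return_pmf)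
  finally show ?thesis .
qed


lemma kernel_closed_Plam: "kernel_closed (states n m) (Plam n m u eps l)"
  unfolding Plam_eq_bind_tremble[abs_def] by (intro kernel_closed_mixture kernel_closed_step)

lemma kernel_measurable_Plam: "kernel_measurable (states n m) (Plam n m u eps l)"
  unfolding Plam_eq_bind_tremble[abs_def]
  using finite_subset[OF set_pmf_tremble_pmf] kernel_measurable_step
  by (intro kernel_measurable_finite_mixture) auto

lemma kernel_closed_Qlam: "kernel_closed (states n m) (Qlam n m u eps l)"
  unfolding Qlam_def[abs_def] by (intro kernel_closed_mixture kernel_closed_step)

lemma kernel_measurable_Qlam:
  assumes "0 < l" "l \<le> 1"
  shows "kernel_measurable (states n m) (Qlam n m u eps l)"
proof -
  have "set_pmf (cond_pmf (tremble_pmf n l) {S. S \<noteq> {}}) \<subseteq> Pow {..<n}"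
    using set_cond_pmf[OF tremble_nonempty_possible[OF assms]] set_pmf_tremble_pmf by blast
  then show ?thesis
    unfolding Qlam_def[abs_def] using kernel_measurable_step
    by (intro kernel_measurable_finite_mixture) (auto intro: finite_subset)
qed

lemma kernel_closed_Qone: "kernel_closed (states n m) (Qone n m u eps)"
  unfolding Qone_def[abs_def] by (intro kernel_closed_mixture kernel_closed_step)

lemma kapply_Qone:
  assumes "z \<in> states n m" "\<And>w. w \<in> states n m \<Longrightarrow> \<bar>g w\<bar> \<le> C"
  shows "kapply (Qone n m u eps) g z =
    (\<Sum>S\<in>(\<lambda>k. {k}) ` {..<n}. kapply (step n m u eps S) g z) / card ((\<lambda>k. {k}) ` {..<n})"
  using assms kernel_closed_step n_pos unfolding Qone_def kapply_def kernel_closed_def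
  by (subst expectation_bind_pmf[where Z="states n m" and C=C])
    (auto simp: integral_pmf_of_set lessThan_empty_iff)

lemma kernel_measurable_Qone: "kernel_measurable (states n m) (Qone n m u eps)"
  unfolding Qone_def[abs_def] using n_pos kernel_measurable_step
  by (intro kernel_measurable_finite_mixture) (auto simp: lessThan_empty_iff)

lemma feller_Qone: "feller (states n m) (Qone n m u eps)"
  unfolding feller_def
proof safe
  fix f assume f: "Cb (states n m) f"
  obtain C where C: "\<forall>z\<in>states n m. \<bar>f z\<bar> \<le> C" using Cb_bounded[OF f] by blast
  have "continuous_on (states n m)
      (\<lambda>z. (\<Sum>S\<in>(\<lambda>k. {k}) ` {..<n}. kapply (step n m u eps S) f z) / card ((\<lambda>k. {k}) ` {..<n}))"
    using feller_step f n_pos by (intro continuous_intros) (auto simp: feller_def lessThan_empty_iff)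
  then show "continuous_on (states n m) (kapply (Qone n m u eps) f)"
    by (rule continuous_on_cong[THEN iffD1, rotated 2]) (use kapply_Qone[of _ f C] C in auto)
qed

lemma kernel_closed_Rlam: "kernel_closed (states n m) (Rlam n m u eps l)"
  unfolding Rlam_def[abs_def] by (intro kernel_closed_mixture kernel_closed_kpow kernel_closed_Plam)

lemma kernel_measurable_Rlam: "kernel_measurable (states n m) (Rlam n m u eps l)"
  unfolding Rlam_def[abs_def]
  by (intro kernel_measurable_nat_mixture kernel_measurable_kpow kernel_closed_Plam kernel_measurable_Plam)

lemma kernel_closed_PL: "kernel_closed (states n m) (PL n m u eps l)"
  unfolding PL_def by (intro kernel_closed_kcomp kernel_closed_Qlam kernel_closed_Rlam)

lemma kernel_measurable_PL: "0 < l \<Longrightarrow> l \<le> 1 \<Longrightarrow> kernel_measurable (states n m) (PL n m u eps l)"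
  unfolding PL_def
  by (intro kernel_measurable_kcomp kernel_closed_Qlam kernel_measurable_Qlam kernel_measurable_Rlam)

text \<open>Conditioned on somebody trembling, exactly one agent trembles with probability at least
  \<open>(1 - \<lambda>)\<^sup>n\<^sup>-\<^sup>1\<close>, and given that, the trembling agent is uniform; hence \<open>Q\<^sub>\<lambda>\<close> is \<open>O(\<lambda>)\<close>-close to \<open>Q\<close>.\<close>
lemma abs_kapply_Qlam_Qone_le:
  fixes l :: real
  assumes l: "0 < l" "l \<le> 1" and z: "z \<in> states n m"
    and g: "\<And>w. w \<in> states n m \<Longrightarrow> \<bar>g w\<bar> \<le> C"
  shows "\<bar>kapply (Qlam n m u eps l) g z - kapply (Qone n m u eps) g z\<bar> \<le> 2 * C * ((real n - 1) * l)"
proof -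
  let ?T = "cond_pmf (tremble_pmf n l) {S. S \<noteq> {}}" and ?A = "(\<lambda>k. {k}) ` {..<n}"
  let ?H = "\<lambda>S. kapply (step n m u eps S) g z"
  define c where "c = l * (1 - l) ^ (n - 1) / phi n l"
  have C: "0 \<le> C" using g[OF z] by linarith
  have cardA: "card ?A = n" by (simp add: card_image)
  have "set_pmf ?T \<subseteq> Pow {..<n}"
    using set_cond_pmf[OF tremble_nonempty_possible[OF l]] set_pmf_tremble_pmf by blast
  then have finT: "finite (set_pmf ?T)" by (rule finite_subset) simp
  have pT: "pmf ?T S = c" if "S \<in> ?A" for S
    using that l pmf_tremble_pmf[of l S] by (auto simp: pmf_cond_tremble c_def)
  have "kapply (Qlam n m u eps l) g z - kapply (Qone n m u eps) g z =
        measure_pmf.expectation ?T ?H - measure_pmf.expectation (pmf_of_set ?A) ?H"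
    using kernel_closed_step z g unfolding Qlam_def Qone_def kapply_def kernel_closed_def
    by (simp add: expectation_bind_pmf[where Z="states n m" and C=C])
  also have "\<bar>\<dots>\<bar> \<le> 2 * C * (1 - card ?A * c)"
  proof (rule abs_expectation_diff_pmf_of_set_le[OF _ _ finT pT])
    show "?A \<noteq> {}" using n_pos by (simp add: lessThan_empty_iff)
    show "\<bar>?H S\<bar> \<le> C" for S by (rule abs_kapply_le[OF kernel_closed_step z g])
  qed auto
  also have "1 - card ?A * c \<le> (real n - 1) * l"
  proof -
    have "(1 - l) ^ (n - 1) * phi n l \<le> (1 - l) ^ (n - 1) * (real n * l)"
      using l phi_le[of l] by (intro mult_left_mono) auto
    then have "(1 - l) ^ (n - 1) \<le> real n * c"
      using phi_pos[OF l] by (simp add: c_def field_simps)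
    moreover have "1 - real (n - 1) * l \<le> (1 - l) ^ (n - 1)"
      using Bernoulli_inequality[of "- l" "n - 1"] l by simp
    ultimately show ?thesis using n_pos cardA by (simp add: of_nat_diff algebra_simps)
  qed
  finally show ?thesis using C by (simp add: mult_left_mono)
qed

end

locale learning_automata_limit = learning_automata +
  fixes PiK :: "state \<Rightarrow> state pmf"
  assumes Pi_lim: "\<forall>f. Cb (states n m) f \<longrightarrow>
        (\<lambda>t. supnorm (states n m)
               (\<lambda>z. kapply (kpow (Plam n m u eps 0) t) f z - kapply PiK f z)) \<longlonglongrightarrow> 0"
    and Pi_supp: "\<forall>z\<in>states n m. set_pmf (PiK z) \<subseteq> pure_states n m"
begin

lemma kernel_closed_PiK: "kernel_closed (states n m) PiK"
  using Pi_supp by (auto simp: kernel_closed_def pure_states_def)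

lemma feller_PiK: "feller (states n m) PiK"
  using Pi_lim Plam_0 kernel_closed_step feller_step
  by (intro feller_if_uniform_limit[OF kernel_closed_PiK, where Ks="kpow (Plam n m u eps 0)"]
      kernel_closed_kpow feller_kpow) auto

lemma kernel_measurable_PiK: "kernel_measurable (states n m) PiK"
  by (rule kernel_measurable_if_feller[OF metric_embedding_real_actions kernel_closed_PiK feller_PiK])

lemma kapply_Rlam_minus_PiK:
  assumes z: "z \<in> states n m" and f: "\<And>w. w \<in> states n m \<Longrightarrow> \<bar>f w\<bar> \<le> C"
  shows "kapply (Rlam n m u eps l) f z - kapply PiK f z =
         measure_pmf.expectation (geometric_pmf (phi n l))
           (\<lambda>t. kapply (kpow (Plam n m u eps 0) t) f z - kapply PiK f z)"
proof -
  have closed: "kernel_closed (states n m) (kpow (Plam n m u eps 0) t)" for t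
    by (intro kernel_closed_kpow kernel_closed_Plam)
  have "kapply (Rlam n m u eps l) f z = measure_pmf.expectation (geometric_pmf (phi n l))
           (\<lambda>t. kapply (kpow (Plam n m u eps 0) t) f z)"
    unfolding Rlam_def kapply_def using closed z f
    by (intro expectation_bind_pmf[where Z="states n m" and C=C]) (auto simp: kernel_closed_def)
  moreover have "integrable (geometric_pmf (phi n l)) (\<lambda>t. kapply (kpow (Plam n m u eps 0) t) f z)"
    using abs_kapply_le[OF closed z f] by (intro measure_pmf.integrable_const_bound[where B=C]) auto
  ultimately show ?thesis by simp
qed

theorem Rlam_tendsto_PiK:
  assumes f: "Cb (states n m) f"
  shows "((\<lambda>l. supnorm (states n m) (\<lambda>z. kapply (Rlam n m u eps l) f z - kapply PiK f z)) \<longlongrightarrow> 0)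
           (at_right 0)"
proof -
  obtain C where C: "\<And>z. z \<in> states n m \<Longrightarrow> \<bar>f z\<bar> \<le> C" using Cb_bounded[OF f] by blast
  let ?h = "\<lambda>t z. kapply (kpow (Plam n m u eps 0) t) f z - kapply PiK f z"
  have "((\<lambda>l. supnorm (states n m) (\<lambda>z. measure_pmf.expectation (geometric_pmf (phi n l)) (\<lambda>t. ?h t z)))
          \<longlongrightarrow> 0) (at_right 0)"
  proof (rule tendsto_supnorm_geometric_mixture[OF states_nonempty _ _ filterlim_phi])
    show "(\<lambda>t. supnorm (states n m) (?h t)) \<longlonglongrightarrow> 0" using Pi_lim f by blast
    fix t z assume z: "z \<in> states n m"
    have "\<bar>kapply (kpow (Plam n m u eps 0) t) f z\<bar> \<le> C"
      by (rule abs_kapply_le[OF kernel_closed_kpow[OF kernel_closed_Plam] z C])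
    moreover have "\<bar>kapply PiK f z\<bar> \<le> C"
      by (rule abs_kapply_le[OF kernel_closed_PiK z C])
    ultimately show "\<bar>?h t z\<bar> \<le> 2 * C" by linarith
  qed
  moreover have "supnorm (states n m) (\<lambda>z. kapply (Rlam n m u eps l) f z - kapply PiK f z) =
      supnorm (states n m) (\<lambda>z. measure_pmf.expectation (geometric_pmf (phi n l)) (\<lambda>t. ?h t z))" for l
    by (rule supnorm_cong) (rule kapply_Rlam_minus_PiK[OF _ C])
  ultimately show ?thesis by simp
qed

theorem PL_tendsto_Qone_PiK:
  assumes f: "Cb (states n m) f"
  shows "((\<lambda>l. supnorm (states n m)
            (\<lambda>z. kapply (PL n m u eps l) f z - kapply (kcomp (Qone n m u eps) PiK) f z)) \<longlongrightarrow> 0)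
           (at_right 0)"
proof -
  obtain C where C: "\<And>z. z \<in> states n m \<Longrightarrow> \<bar>f z\<bar> \<le> C" using Cb_bounded[OF f] by blast
  let ?s = "\<lambda>l. supnorm (states n m) (\<lambda>z. kapply (Rlam n m u eps l) f z - kapply PiK f z)"
  have "((\<lambda>l. 2 * C * ((real n - 1) * l)) \<longlongrightarrow> 2 * C * ((real n - 1) * 0)) (at_right 0)"
    by (intro tendsto_intros)
  then have "((\<lambda>l. ?s l + 2 * C * ((real n - 1) * l)) \<longlongrightarrow> 0 + 2 * C * ((real n - 1) * 0)) (at_right 0)"
    by (rule tendsto_add[OF Rlam_tendsto_PiK[OF f]])
  then have lim: "((\<lambda>l. ?s l + 2 * C * ((real n - 1) * l)) \<longlongrightarrow> 0) (at_right 0)" by simp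
  have "\<forall>\<^sub>F l in at_right 0. 0 < l \<and> l \<le> (1::real)"
    unfolding eventually_at_right_field by (intro exI[of _ 1]) auto
  then have "\<forall>\<^sub>F l in at_right 0. \<forall>z\<in>states n m.
      \<bar>kapply (PL n m u eps l) f z - kapply (kcomp (Qone n m u eps) PiK) f z\<bar> \<le>
      ?s l + 2 * C * ((real n - 1) * l)"
  proof (rule eventually_mono, safe)
    fix l :: real and z assume l: "0 < l" "l \<le> 1" and z: "z \<in> states n m"
    let ?r = "kapply (Rlam n m u eps l) f" and ?g = "kapply PiK f"
    have r: "\<bar>?r w\<bar> \<le> C" and g: "\<bar>?g w\<bar> \<le> C" if "w \<in> states n m" for w
      using abs_kapply_le[OF kernel_closed_Rlam that C] abs_kapply_le[OF kernel_closed_PiK that C] by auto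
    have "kapply (PL n m u eps l) f z - kapply (kcomp (Qone n m u eps) PiK) f z =
          kapply (Qlam n m u eps l) (\<lambda>w. ?r w - ?g w) z +
          (kapply (Qlam n m u eps l) ?g z - kapply (Qone n m u eps) ?g z)"
      unfolding PL_def
      using kapply_kcomp[OF kernel_closed_Qlam kernel_closed_Rlam z C]
        kapply_kcomp[OF kernel_closed_Qone kernel_closed_PiK z C]
        kapply_diff[OF kernel_closed_Qlam z r g] by simp
    moreover have "\<bar>kapply (Qlam n m u eps l) (\<lambda>w. ?r w - ?g w) z\<bar> \<le> ?s l"
      by (rule abs_kapply_le[OF kernel_closed_Qlam z])
        (rule abs_le_supnorm_kapply_diff[OF kernel_closed_Rlam kernel_closed_PiK _ C])
    moreover have "\<bar>kapply (Qlam n m u eps l) ?g z - kapply (Qone n m u eps) ?g z\<bar> \<le>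
        2 * C * ((real n - 1) * l)"
      by (rule abs_kapply_Qlam_Qone_le[OF l z g])
    ultimately show "\<bar>kapply (PL n m u eps l) f z - kapply (kcomp (Qone n m u eps) PiK) f z\<bar> \<le>
        ?s l + 2 * C * ((real n - 1) * l)" by linarith
  qed
  then show ?thesis by (rule tendsto_supnorm_zero[OF states_nonempty _ lim])
qed

theorem ipm_PL:
  assumes "0 < l" "l \<le> 1" "ipm (states n m) (Plam n m u eps l) M"
  shows "ipm (states n m) (PL n m u eps l) M"
  unfolding PL_def Rlam_def[abs_def]
proof (rule ipm_kcomp_geometric_resolvent)
  show "ipm (states n m) (\<lambda>z. bind_pmf (bernoulli_pmf (phi n l))
      (\<lambda>b. if b then Qlam n m u eps l z else Plam n m u eps 0 z)) M"
    using assms(3) by (simp add: Plam_eq_mixture[OF assms(1,2), symmetric])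
qed (use assms phi_pos phi_le_1 in \<open>auto intro: kernel_closed_Plam kernel_measurable_Plam
  kernel_closed_Qlam kernel_measurable_Qlam\<close>)

theorem ipm_Qone_PiK_limit:
  assumes ls: "\<forall>k. 0 < ls k \<and> ls k \<le> 1" "ls \<longlonglongrightarrow> 0"
    and Ms: "\<forall>k. ipm (states n m) (Plam n m u eps (ls k)) (Ms k)"
    and \<nu>: "\<nu> \<in> prob_measures (states n m)" and wc: "weak_conv_Cb (states n m) Ms \<nu>"
  shows "ipm (states n m) (kcomp (Qone n m u eps) PiK) \<nu>"
proof -
  let ?K = "kcomp (Qone n m u eps) PiK"
  have K: "kernel_closed (states n m) ?K" "kernel_measurable (states n m) ?K" "feller (states n m) ?K"
    by (intro kernel_closed_kcomp kernel_measurable_kcomp feller_kcomp kernel_closed_Qone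
        kernel_measurable_Qone feller_Qone kernel_closed_PiK kernel_measurable_PiK feller_PiK)+
  have "filterlim ls (at_right 0) sequentially"
    using ls by (intro tendsto_imp_filterlim_at_right) auto
  then have unif: "(\<lambda>k. supnorm (states n m) (\<lambda>z. kapply (PL n m u eps (ls k)) f z - kapply ?K f z))
      \<longlonglongrightarrow> 0" if "Cb (states n m) f" for f
    by (rule filterlim_compose[OF PL_tendsto_Qone_PiK[OF that]])
  show ?thesis
  proof (rule ipm_if_integral_kapply_eq[OF metric_embedding_real_actions \<nu> K(1,2)])
    fix f assume f: "Cb (states n m) f"
    show "(\<integral>z. kapply ?K f z \<partial>\<nu>) = integral\<^sup>L \<nu> f"
    proof (rule integral_kapply_eq_if_limit[where Ks="\<lambda>k. PL n m u eps (ls k)", OF _ _ K unif _ wc f])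
      show "ipm (states n m) (PL n m u eps (ls k)) (Ms k)" for k
        using ls(1) Ms by (intro ipm_PL) auto
    qed (use ls(1) in \<open>auto intro: kernel_closed_PL kernel_measurable_PL\<close>)
  qed
qed

end

theorem proposition4p3:
  fixes n :: nat and m :: "nat \<Rightarrow> nat" and u :: "nat \<Rightarrow> (nat \<Rightarrow> nat) \<Rightarrow> real"
    and eps :: real and PiK :: "state \<Rightarrow> state pmf"
  assumes n_pos: "n \<ge> 1"
    and acts: "\<forall>i<n. m i \<ge> 1"
    and upos: "\<forall>i<n. \<forall>a\<in>profiles n m. u i a > 0"
    and eps_pos: "eps > 0"
    and eps_small: "\<forall>i<n. \<forall>a\<in>profiles n m. eps * u i a < 1"
    and Pi_lim: "\<forall>f. Cb (states n m) f \<longrightarrow>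
        (\<lambda>t. supnorm (states n m)
               (\<lambda>z. kapply (kpow (Plam n m u eps 0) t) f z - kapply PiK f z)) \<longlonglongrightarrow> 0"
    and Pi_supp: "\<forall>z\<in>states n m. set_pmf (PiK z) \<subseteq> pure_states n m"
  shows "(\<forall>f. Cb (states n m) f \<longrightarrow>
            ((\<lambda>lam. supnorm (states n m)
               (\<lambda>z. kapply (Rlam n m u eps lam) f z - kapply PiK f z)) \<longlongrightarrow> 0) (at_right 0))
       \<and> (\<forall>f. Cb (states n m) f \<longrightarrow>
            ((\<lambda>lam. supnorm (states n m)
               (\<lambda>z. kapply (PL n m u eps lam) f z - kapply (kcomp (Qone n m u eps) PiK) f z))
               \<longlongrightarrow> 0) (at_right 0))
       \<and> (\<forall>lam M. 0 < lam \<and> lam \<le> 1 \<longrightarrow> ipm (states n m) (Plam n m u eps lam) M \<longrightarrow>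
            ipm (states n m) (PL n m u eps lam) M)
       \<and> (\<forall>ls Ms \<nu>. (\<forall>k. 0 < ls k \<and> ls k \<le> 1) \<longrightarrow> ls \<longlonglongrightarrow> 0 \<longrightarrow>
            (\<forall>k. ipm (states n m) (Plam n m u eps (ls k)) (Ms k)) \<longrightarrow>
            \<nu> \<in> prob_measures (states n m) \<longrightarrow> weak_conv_Cb (states n m) Ms \<nu> \<longrightarrow>
            ipm (states n m) (kcomp (Qone n m u eps) PiK) \<nu>)"
proof -
  interpret learning_automata_limit n m u eps PiK
    using assms by unfold_locales auto
  show ?thesis
    using Rlam_tendsto_PiK PL_tendsto_Qone_PiK ipm_PL ipm_Qone_PiK_limit by blast
qed

end
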